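(* Let $1<p\le 2$ and $f\in L^p_A(\mathbb{R}_+)$. Define $g:\mathbb{R}_+^*\to\mathbb{R}_+^*$ as follows: (i) if $\rho=0$ and $\alpha>0$, put $g(x)=x^{2(\alpha+1)}$; (ii) if $\rho>0$ (and $\alpha>-\tfrac12$), put $g(x)=x^{2(\alpha+1)}$ for $x>k$ and $g(x)=x^{3}$ for $0<x\le k$, where $k>0$ is the constant in the estimates (E2)–(E3) for $|c(\lambda)|^{-2}$. Then there is a constant $C>0$ independent of $f$ such that $$\int_{0}^{+\infty}(g(x))^{p-2}\,|\mathcal{F}(f)(x)|^{p}\,\frac{dx}{|c(x)|^{2}}\le C\,\|f\|_{A,p}^{p}.$$
   Context: Chébli–Trimèche setting. Let $\alpha>-\tfrac12$ and let $A:\mathbb{R}_+\to\mathbb{R}_+$ satisfy: (i) $A(x)=x^{2\alpha+1}B(x)$ with $B$ an even $C^\infty$ function on $\mathbb{R}$, $B\ge 1$ on $\mathbb{R}_+$; (ii) $A$ is increasing and unbounded; (iii) $A'/A$ is decreasing on $]0,+\infty[$ and $\lim_{x\to+\infty}A'(x)/A(x)=2\rho\ge 0$; (iv) there are $\eta>0$, $x_0>0$ and a $C^\infty$ function $F$ bounded together with all its derivatives such that for $x\ge x_0$, $A'(x)/A(x)=2\rho+e^{-\eta x}F(x)$ if $\rho>0$, and $A'(x)/A(x)=\frac{2\alpha+1}{x}+e^{-\eta x}F(x)$ if $\rho=0$. For $\lambda\in\mathbb{C}$, $\varphi_\lambda$ is the solution of $u''+\frac{A'}{A}u'=-(\lambda^2+\rho^2)u$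 on $]0,\infty[$ with $u(0)=1$, $u'(0)=0$. $L^p_A(\mathbb{R}_+)=L^p(\mathbb{R}_+,A(x)dx)$ with norm $\|\cdot\|_{A,p}$. For $f\in L^1_A$, $\mathcal{F}(f)(\lambda)=\int_0^\infty f(x)\varphi_\lambda(x)A(x)\,dx$. The function $|c(\lambda)|^{-2}$ is the even continuous Plancherel density on $\mathbb{R}$: $\mathcal{F}$ extends to an isometric isomorphism from $L^2_A(\mathbb{R}_+)$ onto $L^2_c(\mathbb{R}_+):=L^2(\mathbb{R}_+,|c(\lambda)|^{-2}d\lambda)$, $\|\mathcal F f\|_{c,\infty}\le\|f\|_{A,1}$, and by interpolation $\mathcal{F}$ is defined on $L^p_A$, $1\le p\le 2$, with values in $L^{p'}_c$ ($1/p+1/p'=1$). It satisfies, for positive constants $k,k_1,k_2$: (E1) if $\rho=0,\alpha>0$: $k_1|\lambda|^{2\alpha+1}\le|c(\lambda)|^{-2}\le k_2|\lambda|^{2\alpha+1}$ for all $\lambda$; if $\rho>0$: (E2) $k_1|\lambda|^{2\alpha+1}\le|c(\lambda)|^{-2}\le k_2|\lambda|^{2\alpha+1}$ for $|\lambda|>k$, and (E3) $k_1|\lambda|^{2}\le|c(\lambda)|^{-2}\le k_2|\lambda|^{2}$ for $|\lambda|\le k$. *)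

theory Defs
  imports "HOL-Analysis.Analysis"
begin

text \<open>Chebli--Trimeche setting. Functions on R_+ are modelled as functions on the reals
whose values on the negative half-line are ignored; all integrals are over ]0,+oo[
(the point 0 is a null set).\<close>

definition smooth_fun :: "(real \<Rightarrow> real) \<Rightarrow> bool" where
  "smooth_fun h \<longleftrightarrow> (\<forall>n x. ((deriv ^^ n) h) differentiable (at x))"

definition CT_hyp :: "real \<Rightarrow> real \<Rightarrow> (real \<Rightarrow> real) \<Rightarrow> (real \<Rightarrow> real) \<Rightarrow> bool" where
  "CT_hyp \<alpha> \<rho> B A \<longleftrightarrow>
     \<alpha> > -1/2 \<and>
     \<comment> \<open>(i)\<close>
     (\<forall>x\<ge>0. A x = x powr (2*\<alpha>+1) * B x) \<and> smooth_fun B \<and> (\<forall>x. B (-x) = B x) \<and>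
     (\<forall>x\<ge>0. B x \<ge> 1) \<and>
     \<comment> \<open>(ii)\<close>
     mono_on {0..} A \<and> (\<forall>M. \<exists>x\<ge>0. A x > M) \<and>
     \<comment> \<open>(iii)\<close>
     antimono_on {0<..} (\<lambda>x. deriv A x / A x) \<and> \<rho> \<ge> 0 \<and>
     ((\<lambda>x. deriv A x / A x) \<longlongrightarrow> 2*\<rho>) at_top \<and>
     \<comment> \<open>(iv)\<close>
     (\<exists>\<eta>>0. \<exists>x0>0. \<exists>F. smooth_fun F \<and> (\<forall>n. bounded (range ((deriv ^^ n) F))) \<and>
        (\<forall>x\<ge>x0. deriv A x / A x =
           (if \<rho> > 0 then 2*\<rho> else (2*\<alpha>+1)/x) + exp (-\<eta>*x) * F x))"

text \<open>phi l is the solution of u'' + (A'/A) u' = -(\<lambda>^2+\<rho>^2) u on ]0,oo[, u(0)=1, u'(0)=0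
 (only real \<lambda> are needed for the transform on R_+).\<close>
definition is_phi :: "real \<Rightarrow> (real \<Rightarrow> real) \<Rightarrow> (real \<Rightarrow> real \<Rightarrow> real) \<Rightarrow> bool" where
  "is_phi \<rho> A phi \<longleftrightarrow> (\<forall>l::real.
     continuous_on {0..} (phi l) \<and> phi l 0 = 1 \<and>
     (phi l has_real_derivative 0) (at 0 within {0..}) \<and>
     (\<forall>x>0. phi l differentiable (at x) \<and> deriv (phi l) differentiable (at x) \<and>
        deriv (deriv (phi l)) x + deriv A x / A x * deriv (phi l) x
          = -(l\<^sup>2 + \<rho>\<^sup>2) * phi l x))"

definition Lp_w :: "real \<Rightarrow> (real \<Rightarrow> real) \<Rightarrow> (real \<Rightarrow> complex) \<Rightarrow> bool" where
  "Lp_w p W f \<longleftrightarrow> set_borel_measurable lborel {0<..} f \<and>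
     (\<integral>\<^sup>+ x\<in>{0<..}. ennreal (cmod (f x) powr p * W x) \<partial>lborel) < \<infinity>"

definition normp_w :: "real \<Rightarrow> (real \<Rightarrow> real) \<Rightarrow> (real \<Rightarrow> complex) \<Rightarrow> ennreal" where
  "normp_w p W f = (\<integral>\<^sup>+ x\<in>{0<..}. ennreal (cmod (f x) powr p * W x) \<partial>lborel)"

definition FT :: "(real \<Rightarrow> real) \<Rightarrow> (real \<Rightarrow> real \<Rightarrow> real) \<Rightarrow> (real \<Rightarrow> complex) \<Rightarrow> real \<Rightarrow> complex" where
  "FT A phi f l = (LINT x:{0<..}|lborel. f x * complex_of_real (phi l x * A x))"

text \<open>Extension of the Fourier transform to L^p_A (1 < p \<le> 2), by density of L^1_A \<inter> L^p_A:
 h is the transform of f iff h \<in> L^{p'}_c and h is the L^{p'}_c-limit of FT f_n for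
 some sequence f_n in L^1_A \<inter> L^p_A converging to f in L^p_A.\<close>
definition FT_ext :: "real \<Rightarrow> (real \<Rightarrow> real) \<Rightarrow> (real \<Rightarrow> real) \<Rightarrow> (real \<Rightarrow> real \<Rightarrow> real)
    \<Rightarrow> (real \<Rightarrow> complex) \<Rightarrow> (real \<Rightarrow> complex) \<Rightarrow> bool" where
  "FT_ext p A W phi f h \<longleftrightarrow> Lp_w (p/(p-1)) W h \<and>
     (\<exists>fs. (\<forall>n. Lp_w 1 A (fs n) \<and> Lp_w p A (fs n)) \<and>
       (\<lambda>n. normp_w p A (\<lambda>x. fs n x - f x)) \<longlonglongrightarrow> 0 \<and>
       (\<lambda>n. normp_w (p/(p-1)) W (\<lambda>x. FT A phi (fs n) x - h x)) \<longlonglongrightarrow> 0)"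

text \<open>Plancherel density W = |c|^{-2}: even, continuous, Plancherel identity on L^1_A \<inter> L^2_A,
 the bound |FT f| \<le> ||f||_{A,1}, and the estimates (E1)--(E3) with constants k, k1, k2.\<close>
definition plancherel_density :: "real \<Rightarrow> real \<Rightarrow> (real \<Rightarrow> real) \<Rightarrow> (real \<Rightarrow> real \<Rightarrow> real)
    \<Rightarrow> (real \<Rightarrow> real) \<Rightarrow> real \<Rightarrow> real \<Rightarrow> real \<Rightarrow> bool" where
  "plancherel_density \<alpha> \<rho> A phi W k k1 k2 \<longleftrightarrow>
     (\<forall>x. W (-x) = W x) \<and> continuous_on UNIV W \<and> (\<forall>x. W x \<ge> 0) \<and>
     (\<forall>f. Lp_w 1 A f \<and> Lp_w 2 A f \<longrightarrow> normp_w 2 W (FT A phi f) = normp_w 2 A f) \<and>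
     (\<forall>f l. Lp_w 1 A f \<longrightarrow> ennreal (cmod (FT A phi f l)) \<le> normp_w 1 A f) \<and>
     k > 0 \<and> k1 > 0 \<and> k2 > 0 \<and>
     (\<rho> = 0 \<and> \<alpha> > 0 \<longrightarrow>
        (\<forall>l. k1 * \<bar>l\<bar> powr (2*\<alpha>+1) \<le> W l \<and> W l \<le> k2 * \<bar>l\<bar> powr (2*\<alpha>+1))) \<and>
     (\<rho> > 0 \<longrightarrow>
        (\<forall>l. \<bar>l\<bar> > k \<longrightarrow> k1 * \<bar>l\<bar> powr (2*\<alpha>+1) \<le> W l \<and> W l \<le> k2 * \<bar>l\<bar> powr (2*\<alpha>+1)) \<and>
        (\<forall>l. \<bar>l\<bar> \<le> k \<longrightarrow> k1 * l\<^sup>2 \<le> W l \<and> W l \<le> k2 * l\<^sup>2))"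

definition gw :: "real \<Rightarrow> real \<Rightarrow> real \<Rightarrow> real \<Rightarrow> real" where
  "gw \<alpha> \<rho> k x = (if \<rho> = 0 then x powr (2*(\<alpha>+1))
                  else if x > k then x powr (2*(\<alpha>+1)) else x ^ 3)"

end

theory Submission
  imports Defs
begin

(* The proof is a Marcinkiewicz-type interpolation carried out by hand.
   1. Eigenfunctions.  From the hypotheses on A and the bound |F f| \<le> ||f||_{A,1} we get
      |phi_l| \<le> 1; the equation in integrated form and Gronwall's inequality give continuous
      dependence on l, hence joint continuity of phi and measurability of F f.
   2. Abstract interpolation (locale pitt_interpolation).  For an additive operator T bounded
      L^1 \<rightarrow> L^oo and L^2_A \<rightarrow> L^2_W, and a weight G for which W/G^2 dx satisfies a weak-type
      estimate, the layer-cake formula, a distribution estimate splitting f at height t into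
      large and small parts, and Hardy-type integrations in t give the weighted L^p bound.
   3. The weight g satisfies the weak-type estimate by the bounds (E1)-(E3) on |c|^-2, so the
      bound holds on L^1_A \<inter> L^p_A (for p = 2 it is Plancherel).
   4. A density argument with Fatou's lemma extends it to the transform on L^p_A. *)

lemma CT_hyp_density:
  assumes "CT_hyp \<alpha> \<rho> B A"
  shows CT_A_pos: "\<And>x. x > 0 \<Longrightarrow> A x > 0"
    and CT_A_nonneg: "\<And>x. x \<ge> 0 \<Longrightarrow> A x \<ge> 0"
    and CT_A_mono: "\<And>x y. 0 \<le> x \<Longrightarrow> x \<le> y \<Longrightarrow> A x \<le> A y"
    and CT_A_cont: "continuous_on {0..} A"
    and CT_A_deriv: "\<And>x. x > 0 \<Longrightarrow> (A has_real_derivative deriv A x) (at x)"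
    and CT_alpha: "\<alpha> > -1/2"
proof -
  have A_eq: "\<forall>x\<ge>0. A x = x powr (2*\<alpha>+1) * B x" and B_smooth: "smooth_fun B"
    and B_ge: "\<forall>x\<ge>0. B x \<ge> 1" and A_mono: "mono_on {0..} A"
    using assms unfolding CT_hyp_def by auto
  show "\<alpha> > -1/2" using assms unfolding CT_hyp_def by auto
  show "A x > 0" if "x > 0" for x
    using A_eq B_ge that by (smt (verit) mult_pos_pos powr_gt_zero)
  show "A x \<ge> 0" if "x \<ge> 0" for x
    using A_eq B_ge that by (smt (verit) mult_nonneg_nonneg powr_ge_zero)
  show "A x \<le> A y" if "0 \<le> x" "x \<le> y" for x y
    using A_mono that by (auto simp: mono_on_def)
  have B_diff: "B differentiable (at x)" for x
    using B_smooth unfolding smooth_fun_def by (metis funpow_0)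
  then have "continuous_on UNIV B"
    by (simp add: continuous_at_imp_continuous_on differentiable_imp_continuous_within)
  then have "continuous_on {0..} (\<lambda>x. x powr (2*\<alpha>+1) * B x)"
    using \<open>\<alpha> > -1/2\<close>
    by (intro continuous_intros continuous_on_powr' continuous_on_subset[OF \<open>continuous_on UNIV B\<close>]) auto
  then show "continuous_on {0..} A"
    by (rule continuous_on_cong[THEN iffD1, rotated 2]) (use A_eq in auto)
  show "(A has_real_derivative deriv A x) (at x)" if x: "x > 0" for x
  proof -
    obtain D where D: "(B has_real_derivative D) (at x)"
      using B_diff[of x] by (auto simp: real_differentiable_def)
    have "((\<lambda>x. x powr (2*\<alpha>+1) * B x) has_real_derivative
        (2*\<alpha>+1) * x powr (2*\<alpha>+1 - 1) * B x + x powr (2*\<alpha>+1) * D) (at x)"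
      using x by (auto intro!: derivative_eq_intros D)
    then have "(A has_real_derivative
        (2*\<alpha>+1) * x powr (2*\<alpha>+1 - 1) * B x + x powr (2*\<alpha>+1) * D) (at x)"
      by (rule has_field_derivative_transform_within_open[where S="{0<..}"]) (use x A_eq in auto)
    then show ?thesis using DERIV_imp_deriv by metis
  qed
qed

lemma interval_mass:
  fixes A :: "real \<Rightarrow> real"
  assumes A_pos: "\<And>x. x > 0 \<Longrightarrow> A x > 0"
    and A_mono: "\<And>x y. 0 \<le> x \<Longrightarrow> x \<le> y \<Longrightarrow> A x \<le> A y"
    and ab: "0 < a" "a < b"
  shows "0 < (\<integral>\<^sup>+ y. ennreal (indicator {a..b} y * A y) \<partial>lborel)"
    and "(\<integral>\<^sup>+ y. ennreal (indicator {a..b} y * A y) \<partial>lborel) < \<infinity>"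
proof -
  have mass: "(\<integral>\<^sup>+ y. ennreal c * indicator {a..b} y \<partial>lborel) = ennreal c * ennreal (b - a)" for c
    using ab by (subst nn_integral_cmult_indicator) auto
  have "ennreal (A a) * ennreal (b - a) \<le> (\<integral>\<^sup>+ y. ennreal (indicator {a..b} y * A y) \<partial>lborel)"
    unfolding mass[symmetric] using ab
    by (intro nn_integral_mono) (auto simp: indicator_def A_mono intro!: ennreal_leI)
  moreover have "ennreal (A a) * ennreal (b - a) > 0"
    using ab A_pos[of a] by (simp add: ennreal_mult''[symmetric])
  ultimately show "0 < (\<integral>\<^sup>+ y. ennreal (indicator {a..b} y * A y) \<partial>lborel)" by order
  have "(\<integral>\<^sup>+ y. ennreal (indicator {a..b} y * A y) \<partial>lborel) \<le> ennreal (A b) * ennreal (b - a)"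
    unfolding mass[symmetric] using ab
    by (intro nn_integral_mono) (auto simp: indicator_def A_mono intro!: ennreal_leI)
  also have "\<dots> < \<infinity>" by (simp add: ennreal_mult_less_top)
  finally show "(\<integral>\<^sup>+ y. ennreal (indicator {a..b} y * A y) \<partial>lborel) < \<infinity>" .
qed

lemma FT_sign_test_function:
  fixes A :: "real \<Rightarrow> real" and phi :: "real \<Rightarrow> real \<Rightarrow> real"
  assumes A_pos: "\<And>x. x > 0 \<Longrightarrow> A x > 0"
    and A_mono: "\<And>x y. 0 \<le> x \<Longrightarrow> x \<le> y \<Longrightarrow> A x \<le> A y"
    and A_cont: "continuous_on {0..} A"
    and u_cont: "continuous_on {a..b} (phi l)" and u_nz: "\<And>y. y \<in> {a..b} \<Longrightarrow> phi l y \<noteq> 0"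
    and ab: "0 < a" "a < b"
  defines "f \<equiv> \<lambda>y. complex_of_real (indicator {a..b} y * sgn (phi l y))"
  shows "Lp_w 1 A f"
    and "normp_w 1 A f = (\<integral>\<^sup>+ y. ennreal (indicator {a..b} y * A y) \<partial>lborel)"
    and "ennreal (cmod (FT A phi f l)) = (\<integral>\<^sup>+ y. ennreal (indicator {a..b} y * (\<bar>phi l y\<bar> * A y)) \<partial>lborel)"
proof -
  define S where "S = {a..b}"
  have S_pos: "y \<in> S \<Longrightarrow> y > 0" for y using ab by (auto simp: S_def)
  have A_contS: "continuous_on S A" by (rule continuous_on_subset[OF A_cont]) (auto dest: S_pos)
  have meas_on_S: "(\<lambda>y. indicator S y * g y) \<in> borel_measurable lborel"
    if "continuous_on S g" for g :: "real \<Rightarrow> real"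
    using borel_measurable_continuous_on_indicator[OF _ that] by (simp add: S_def)
  have "(\<lambda>y. sgn (indicator S y * phi l y)) \<in> borel_measurable lborel"
    using meas_on_S[OF u_cont[folded S_def]] by measurable
  moreover have "(\<lambda>y. sgn (indicator S y * phi l y)) = (\<lambda>y. indicator S y * sgn (phi l y))"
    by (auto simp: fun_eq_iff indicator_def)
  ultimately have "(\<lambda>y. indicator S y * sgn (phi l y)) \<in> borel_measurable lborel" by simp
  then have f_meas: "f \<in> borel_measurable lborel" unfolding f_def S_def by measurable
  have norm_f: "cmod (f y) = indicator S y" for y
    using u_nz[of y] by (auto simp: f_def S_def indicator_def)
  show norm_eq: "normp_w 1 A f = (\<integral>\<^sup>+ y. ennreal (indicator {a..b} y * A y) \<partial>lborel)"
    unfolding normp_w_def using ab by (intro nn_integral_cong) (auto simp: norm_f indicator_def S_def)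
  show "Lp_w 1 A f"
    using f_meas norm_eq interval_mass(2)[OF A_pos A_mono ab]
    unfolding Lp_w_def normp_w_def set_borel_measurable_def by auto
  define g where "g y = indicator S y * (\<bar>phi l y\<bar> * A y)" for y
  have g_nonneg: "0 \<le> g y" for y using A_pos[of y] by (auto simp: g_def indicator_def dest: S_pos)
  have "continuous_on S (\<lambda>y. \<bar>phi l y\<bar> * A y)"
    by (intro continuous_intros A_contS u_cont[folded S_def])
  then have "integrable lborel (\<lambda>y. indicator S y *\<^sub>R (\<bar>phi l y\<bar> * A y))"
    by (intro borel_integrable_compact) (simp_all add: S_def)
  then have g_int: "integrable lborel g" by (simp add: g_def[abs_def])
  have "FT A phi f l = complex_of_real (integral\<^sup>L lborel g)"
    unfolding FT_def set_lebesgue_integral_def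
    by (subst integral_complex_of_real[symmetric], rule Bochner_Integration.integral_cong)
       (use ab in \<open>auto simp: f_def g_def S_def indicator_def abs_sgn\<close>)
  then show "ennreal (cmod (FT A phi f l)) = (\<integral>\<^sup>+ y. ennreal (indicator {a..b} y * (\<bar>phi l y\<bar> * A y)) \<partial>lborel)"
    using nn_integral_eq_integral[OF g_int] g_nonneg
    by (simp add: integral_nonneg_AE g_def S_def)
qed

(* Since the transform is bounded by the L^1_A norm, every phi_l is bounded by 1 on ]0,+oo[:
   if |phi_l| > m > 1 on an interval, the sign test function there has transform of modulus
   at least m times its norm. *)
lemma phi_abs_le_one:
  fixes A :: "real \<Rightarrow> real" and phi :: "real \<Rightarrow> real \<Rightarrow> real"
  assumes A_pos: "\<And>x. x > 0 \<Longrightarrow> A x > 0"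
    and A_mono: "\<And>x y. 0 \<le> x \<Longrightarrow> x \<le> y \<Longrightarrow> A x \<le> A y"
    and A_cont: "continuous_on {0..} A"
    and u_cont: "continuous_on {0..} (phi l)"
    and FT_L1: "\<And>f. Lp_w 1 A f \<Longrightarrow> ennreal (cmod (FT A phi f l)) \<le> normp_w 1 A f"
    and x0: "x0 > 0"
  shows "\<bar>phi l x0\<bar> \<le> 1"
proof (rule ccontr)
  assume "\<not> \<bar>phi l x0\<bar> \<le> 1"
  define m where "m = (1 + \<bar>phi l x0\<bar>) / 2"
  have m: "1 < m" "m < \<bar>phi l x0\<bar>" using \<open>\<not> \<bar>phi l x0\<bar> \<le> 1\<close> by (auto simp: m_def)
  have "continuous (at x0 within {0..}) (phi l)"
    using u_cont x0 by (simp add: continuous_on_eq_continuous_within)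
  then obtain d where d: "d > 0"
    and close: "\<And>y. y \<in> {0..} \<Longrightarrow> dist y x0 < d \<Longrightarrow> dist (phi l y) (phi l x0) < \<bar>phi l x0\<bar> - m"
    using m unfolding continuous_within_eps_delta by (metis diff_gt_0_iff_gt)
  define b where "b = x0 + d/2"
  have ab: "0 < x0" "x0 < b" using x0 d by (auto simp: b_def)
  have big: "m < \<bar>phi l y\<bar>" if "y \<in> {x0..b}" for y
    using close[of y] that d x0 by (auto simp: b_def dist_real_def)
  have cont: "continuous_on {x0..b} (phi l)" by (rule continuous_on_subset[OF u_cont]) (use x0 in auto)
  have nz: "y \<in> {x0..b} \<Longrightarrow> phi l y \<noteq> 0" for y using big m by force
  define N where "N = (\<integral>\<^sup>+ y. ennreal (indicator {x0..b} y * A y) \<partial>lborel)"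
  note test = FT_sign_test_function[where phi=phi and l=l, OF A_pos A_mono A_cont cont nz ab]
  have "continuous_on {x0..b} A" by (rule continuous_on_subset[OF A_cont]) (use x0 in auto)
  then have "(\<lambda>y. indicator {x0..b} y * A y) \<in> borel_measurable lborel"
    using borel_measurable_continuous_on_indicator[of "{x0..b}" A] by simp
  then have "ennreal m * N = (\<integral>\<^sup>+ y. ennreal m * ennreal (indicator {x0..b} y * A y) \<partial>lborel)"
    unfolding N_def by (intro nn_integral_cmult[symmetric]) simp
  also have "\<dots> \<le> (\<integral>\<^sup>+ y. ennreal (indicator {x0..b} y * (\<bar>phi l y\<bar> * A y)) \<partial>lborel)"
  proof (intro nn_integral_mono)
    fix y
    have "m * (indicator {x0..b} y * A y) \<le> indicator {x0..b} y * (\<bar>phi l y\<bar> * A y)"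
      using big[of y] A_pos[of y] x0 by (auto simp: indicator_def)
    then show "ennreal m * ennreal (indicator {x0..b} y * A y)
        \<le> ennreal (indicator {x0..b} y * (\<bar>phi l y\<bar> * A y))"
      using m by (simp add: ennreal_mult'[symmetric] ennreal_leI)
  qed
  also have "\<dots> \<le> N" using FT_L1[OF test(1)] test(2,3) by (simp only: N_def)
  finally have "ennreal m * N \<le> N" .
  moreover obtain n where n: "N = ennreal n" "n > 0"
    using interval_mass[where A=A, OF A_pos A_mono ab] unfolding N_def[symmetric] by (cases N) auto
  ultimately have "m * n \<le> n" using m by (simp add: ennreal_mult[symmetric] ennreal_le_iff)
  then show False using m n by simp
qed

(* A function with right derivative 0 at the origin cannot have its derivative bounded away
   from 0 on a whole right neighbourhood of the origin (mean value theorem on [x/2,x]). *)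
lemma deriv_not_bounded_away_near_0:
  fixes u :: "real \<Rightarrow> real"
  assumes u_cont: "continuous_on {0..} u"
    and u_deriv0: "(u has_real_derivative 0) (at 0 within {0..})"
    and u_diff: "\<And>x. x > 0 \<Longrightarrow> u differentiable (at x)"
    and c: "c > 0" and \<delta>: "\<delta> > 0"
    and low: "\<And>x. 0 < x \<Longrightarrow> x < \<delta> \<Longrightarrow> c \<le> \<bar>deriv u x\<bar>"
  shows False
proof -
  have "((\<lambda>y. (u y - u 0) / (y - 0)) \<longlongrightarrow> 0) (at 0 within {0..})"
    using u_deriv0 by (simp add: has_field_derivative_iff)
  then have "\<forall>\<^sub>F y in at 0 within {0..}. dist ((u y - u 0) / (y - 0)) 0 < c/8"
    using c by (intro tendstoD) auto
  then obtain \<eta> where \<eta>: "\<eta> > 0"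
    and slope: "\<And>y. 0 < y \<Longrightarrow> y < \<eta> \<Longrightarrow> \<bar>u y - u 0\<bar> < c/8 * y"
    unfolding eventually_at by (auto simp: dist_real_def abs_divide divide_less_eq)
  define x where "x = min \<delta> \<eta> / 2"
  have x: "0 < x" "x < \<delta>" "x < \<eta>" using \<delta> \<eta> by (auto simp: x_def)
  obtain l z where z: "x/2 < z" "z < x" and "DERIV u z :> l" and mvt: "u x - u (x/2) = (x - x/2) * l"
    using MVT[of "x/2" x u] x u_diff continuous_on_subset[OF u_cont, of "{x/2..x}"]
    by (smt (verit, best) atLeastAtMost_iff atLeast_iff field_sum_of_halves subsetI)
  then have "l = deriv u z" by (simp add: DERIV_imp_deriv)
  then have "c \<le> \<bar>l\<bar>" using low[of z] z x by auto
  moreover have "\<bar>u x - u (x/2)\<bar> = x/2 * \<bar>l\<bar>"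
    unfolding mvt using x by (simp add: abs_mult)
  ultimately have "x/2 * c \<le> \<bar>u x - u (x/2)\<bar>" using x by (metis half_gt_zero mult_left_mono less_imp_le)
  also have "\<dots> \<le> \<bar>u x - u 0\<bar> + \<bar>u (x/2) - u 0\<bar>" by linarith
  also have "\<dots> < c/8 * x + c/8 * (x/2)" using slope[of x] slope[of "x/2"] x by simp
  finally show False using c x by simp
qed

(* The flux A u' + mu \<integral>_0^x A u of a solution of (A u')' = -mu A u is constant on ]0,+oo[. *)
lemma eigenfunction_flux_constant:
  fixes u A :: "real \<Rightarrow> real" and \<mu> :: real
  assumes A_pos: "\<And>x. x > 0 \<Longrightarrow> A x > 0"
    and A_cont: "continuous_on {0..} A"
    and A_deriv: "\<And>x. x > 0 \<Longrightarrow> (A has_real_derivative deriv A x) (at x)"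
    and u_cont: "continuous_on {0..} u"
    and ode: "\<And>x. x > 0 \<Longrightarrow> u differentiable (at x) \<and> deriv u differentiable (at x) \<and>
        deriv (deriv u) x + deriv A x / A x * deriv u x = -\<mu> * u x"
  obtains c where "\<And>x. x > 0 \<Longrightarrow> A x * deriv u x + \<mu> * integral {0..x} (\<lambda>s. A s * u s) = c"
proof -
  define I where "I = (\<lambda>x. integral {0..x} (\<lambda>s. A s * u s))"
  have Au_cont: "continuous_on {0..} (\<lambda>s. A s * u s)" by (intro continuous_intros A_cont u_cont)
  have I_deriv: "(I has_real_derivative A x * u x) (at x)" if "x > 0" for x
  proof -
    have "(I has_real_derivative A x * u x) (at x within {0..x+1})"
      unfolding I_def using that
      by (intro integral_has_real_derivative continuous_on_subset[OF Au_cont]) auto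
    then show ?thesis using that by (simp add: at_within_Icc_at)
  qed
  define G where "G = (\<lambda>x. A x * deriv u x + \<mu> * I x)"
  have "(G has_real_derivative 0) (at x)" if x: "x > 0" for x
  proof -
    have u2: "(deriv u has_real_derivative deriv (deriv u) x) (at x)"
      using ode[OF x] by (simp add: DERIV_deriv_iff_real_differentiable)
    have "(G has_real_derivative deriv A x * deriv u x + deriv (deriv u) x * A x + \<mu> * (A x * u x)) (at x)"
      unfolding G_def by (intro DERIV_add DERIV_mult A_deriv[OF x] u2 DERIV_cmult I_deriv[OF x])
    moreover have "deriv A x * deriv u x + deriv (deriv u) x * A x + \<mu> * (A x * u x) = 0"
      using ode[OF x] A_pos[OF x] by (simp add: field_simps)
    ultimately show ?thesis by simp
  qed
  then obtain c where "\<And>x. x > 0 \<Longrightarrow> G x = c"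
    using has_field_derivative_zero_constant[of "{0<..}" G]
    by (metis convex_real_interval(3) greaterThan_iff has_field_derivative_at_within)
  then show ?thesis using that by (simp add: G_def I_def)
qed

(* Integrated form of the eigenfunction equation: the flux vanishes, since a nonzero flux would
   force |u'| to stay away from 0 near the origin, contradicting u'(0) = 0; hence
   A(x) u'(x) = -mu \<integral>_0^x A u. *)
lemma eigenfunction_integral_form:
  fixes u A :: "real \<Rightarrow> real" and \<mu> :: real
  assumes A_pos: "\<And>x. x > 0 \<Longrightarrow> A x > 0"
    and A_mono: "\<And>x y. 0 \<le> x \<Longrightarrow> x \<le> y \<Longrightarrow> A x \<le> A y"
    and A_cont: "continuous_on {0..} A"
    and A_deriv: "\<And>x. x > 0 \<Longrightarrow> (A has_real_derivative deriv A x) (at x)"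
    and u_cont: "continuous_on {0..} u"
    and u_deriv0: "(u has_real_derivative 0) (at 0 within {0..})"
    and ode: "\<And>x. x > 0 \<Longrightarrow> u differentiable (at x) \<and> deriv u differentiable (at x) \<and>
        deriv (deriv u) x + deriv A x / A x * deriv u x = -\<mu> * u x"
    and x: "x > 0"
  shows "A x * deriv u x = -\<mu> * integral {0..x} (\<lambda>s. A s * u s)"
proof -
  define I where "I = (\<lambda>x. integral {0..x} (\<lambda>s. A s * u s))"
  obtain c where c: "\<And>x. x > 0 \<Longrightarrow> A x * deriv u x + \<mu> * I x = c"
    using eigenfunction_flux_constant[OF A_pos A_cont A_deriv u_cont ode] unfolding I_def by blast
  have "c = 0"
  proof (rule ccontr)
    assume "c \<noteq> 0"
    define \<epsilon> where "\<epsilon> = \<bar>c\<bar> / (2 * (\<bar>\<mu>\<bar> + 1))"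
    have "continuous_on {0..1} I" unfolding I_def
      by (intro indefinite_integral_continuous_1 integrable_continuous_interval
          continuous_on_subset[OF continuous_on_mult[OF A_cont u_cont]]) auto
    then have "continuous (at 0 within {0..1}) I" by (simp add: continuous_on_eq_continuous_within)
    moreover have "\<epsilon> > 0" using \<open>c \<noteq> 0\<close> by (simp add: \<epsilon>_def)
    ultimately obtain \<delta> where \<delta>: "\<delta> > 0"
      and I_small: "\<And>y. y \<in> {0..1} \<Longrightarrow> dist y 0 < \<delta> \<Longrightarrow> dist (I y) (I 0) < \<epsilon>"
      unfolding continuous_within_eps_delta by blast
    have c_half: "(\<bar>\<mu>\<bar> + 1) * \<epsilon> = \<bar>c\<bar> / 2" by (simp add: \<epsilon>_def field_simps)
    have "\<bar>c\<bar> / (2 * A 1) \<le> \<bar>deriv u x\<bar>" if "0 < x" "x < min \<delta> 1" for x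
    proof -
      have "\<bar>\<mu> * I x\<bar> = \<bar>\<mu>\<bar> * \<bar>I x\<bar>" by (rule abs_mult)
      also have "\<dots> \<le> (\<bar>\<mu>\<bar> + 1) * \<epsilon>"
        using I_small[of x] that \<open>\<epsilon> > 0\<close> by (intro mult_mono) (auto simp: I_def dist_real_def)
      finally have "\<bar>\<mu> * I x\<bar> \<le> \<bar>c\<bar>/2" unfolding c_half .
      moreover have "A x * deriv u x + \<mu> * I x = c" using c[of x] that by simp
      ultimately have "\<bar>c\<bar>/2 \<le> \<bar>A x * deriv u x\<bar>" by linarith
      also have "\<dots> \<le> A 1 * \<bar>deriv u x\<bar>"
        using A_mono[of x 1] A_pos[of x] that by (simp add: abs_mult mult_right_mono)
      finally show ?thesis using A_pos[of 1] by (simp add: field_simps)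
    qed
    then show False
      using deriv_not_bounded_away_near_0[OF u_cont u_deriv0, of "\<bar>c\<bar> / (2 * A 1)" "min \<delta> 1"]
        ode \<delta> \<open>c \<noteq> 0\<close> A_pos[of 1] by auto
  qed
  then show ?thesis using c[OF x] by (simp add: I_def algebra_simps)
qed

lemma gronwall_integral:
  fixes \<psi> :: "real \<Rightarrow> real"
  assumes cont: "continuous_on {0..X} \<psi>" and K: "K > 0" and a: "a \<ge> 0"
    and le: "\<And>x. x \<in> {0..X} \<Longrightarrow> \<psi> x \<le> a + K * integral {0..x} \<psi>"
    and x: "x \<in> {0..X}"
  shows "\<psi> x \<le> a * exp (K * x)"
proof -
  define J where "J = (\<lambda>x. integral {0..x} \<psi>)"
  define F where "F = (\<lambda>x. exp (-K*x) * (J x + a/K))"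
  have J_cont: "continuous_on {0..X} J" unfolding J_def
    by (intro indefinite_integral_continuous_1 integrable_continuous_interval cont)
  have J_deriv: "(J has_real_derivative \<psi> y) (at y)" if "0 < y" "y < X" for y
  proof -
    have "(J has_real_derivative \<psi> y) (at y within {0..X})" unfolding J_def
      by (rule integral_has_real_derivative[OF cont]) (use that in auto)
    then show ?thesis using that by (simp add: at_within_Icc_at)
  qed
  have F_decr: "F x \<le> F 0"
  proof (cases "x = 0")
    case False
    then have x0: "0 < x" using x by auto
    have F_cont: "continuous_on {0..x} F" unfolding F_def
      by (intro continuous_intros continuous_on_subset[OF J_cont]) (use x in auto)
    have F_deriv: "(F has_real_derivative exp (-K*y) * (\<psi> y - K * J y - a)) (at y)"
      if "0 < y" "y < x" for y
      unfolding F_def using that x K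
      by (auto intro!: derivative_eq_intros J_deriv simp: field_simps)
    obtain l z where z: "0 < z" "z < x" "DERIV F z :> l" "F x - F 0 = (x - 0) * l"
      using MVT[OF x0 F_cont] F_deriv by (meson real_differentiable_def)
    have "l = exp (-K*z) * (\<psi> z - K * J z - a)" using z(3) F_deriv[OF z(1,2)] by (rule DERIV_unique)
    moreover have "\<psi> z - K * J z - a \<le> 0" using le[of z] z x by (auto simp: J_def)
    ultimately have "l \<le> 0" by (simp add: mult_nonneg_nonpos)
    then have "x * l \<le> 0" using x0 by (simp add: mult_nonneg_nonpos)
    then show ?thesis using z(4) by simp
  qed simp
  have "J 0 = 0" by (simp add: J_def)
  then have "J x + a/K \<le> a/K * exp (K*x)"
    using F_decr by (simp add: F_def exp_minus field_simps)
  then have "K * (K * J x + a) \<le> K * (a * exp (K*x))" using K by (simp add: field_simps)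
  then have "K * J x \<le> a * exp (K*x) - a" using K by (simp add: mult_le_cancel_left_pos)
  then show ?thesis using le[OF x] by (simp add: J_def)
qed

lemma integral_form_deriv_diff:
  fixes u v A :: "real \<Rightarrow> real" and \<mu> \<nu> t :: real
  assumes A_pos: "\<And>x. x > 0 \<Longrightarrow> A x > 0" and A_nonneg: "\<And>x. x \<ge> 0 \<Longrightarrow> A x \<ge> 0"
    and A_mono: "\<And>x y. 0 \<le> x \<Longrightarrow> x \<le> y \<Longrightarrow> A x \<le> A y"
    and A_cont: "continuous_on {0..} A"
    and u_cont: "continuous_on {0..} u" and v_cont: "continuous_on {0..} v"
    and u_int: "A t * deriv u t = -\<mu> * integral {0..t} (\<lambda>s. A s * u s)"
    and v_int: "A t * deriv v t = -\<nu> * integral {0..t} (\<lambda>s. A s * v s)"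
    and v_bound: "\<And>x. x \<ge> 0 \<Longrightarrow> \<bar>v x\<bar> \<le> 1"
    and t: "t > 0"
  shows "\<bar>deriv u t - deriv v t\<bar> \<le> \<bar>\<mu>\<bar> * integral {0..t} (\<lambda>s. \<bar>u s - v s\<bar>) + \<bar>\<mu> - \<nu>\<bar> * t"
proof -
  have int_on: "f integrable_on {0..t}" if "continuous_on {0..} f" for f :: "real \<Rightarrow> real"
    by (intro integrable_continuous_interval continuous_on_subset[OF that]) auto
  define g where "g = (\<lambda>s. A s * (\<mu> * (u s - v s) + (\<mu> - \<nu>) * v s))"
  define b where "b = (\<lambda>s. A t * (\<bar>\<mu>\<bar> * \<bar>u s - v s\<bar> + \<bar>\<mu> - \<nu>\<bar>))"
  have "A t * (deriv u t - deriv v t)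
      = - integral {0..t} (\<lambda>s. \<mu> * (A s * u s) - \<nu> * (A s * v s))"
    using u_int v_int
    by (subst integral_diff) (auto simp: algebra_simps intro!: integrable_on_cmult_left int_on
        continuous_intros A_cont u_cont v_cont)
  also have "(\<lambda>s. \<mu> * (A s * u s) - \<nu> * (A s * v s)) = g"
    by (auto simp: g_def algebra_simps)
  finally have "\<bar>A t * (deriv u t - deriv v t)\<bar> = \<bar>integral {0..t} g\<bar>" by simp
  then have "A t * \<bar>deriv u t - deriv v t\<bar> = \<bar>integral {0..t} g\<bar>"
    using A_pos[OF t] by (simp add: abs_mult)
  also have "\<dots> \<le> integral {0..t} b"
  proof (rule integral_norm_bound_integral[where f=g, simplified real_norm_def])
    show "g integrable_on {0..t}" "b integrable_on {0..t}"
      unfolding g_def b_def by (intro int_on continuous_intros A_cont u_cont v_cont)+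
    fix s assume s: "s \<in> {0..t}"
    have "\<bar>\<mu> * (u s - v s) + (\<mu> - \<nu>) * v s\<bar> \<le> \<bar>\<mu>\<bar> * \<bar>u s - v s\<bar> + \<bar>\<mu> - \<nu>\<bar> * \<bar>v s\<bar>"
      by (metis abs_mult abs_triangle_ineq)
    also have "\<dots> \<le> \<bar>\<mu>\<bar> * \<bar>u s - v s\<bar> + \<bar>\<mu> - \<nu>\<bar>"
      using v_bound[of s] s by (simp add: mult_left_le)
    finally show "\<bar>g s\<bar> \<le> b s"
      unfolding g_def b_def abs_mult using A_mono[of s t] A_nonneg[of s] s
      by (intro mult_mono) auto
  qed
  also have "integral {0..t} b = A t * (\<bar>\<mu>\<bar> * integral {0..t} (\<lambda>s. \<bar>u s - v s\<bar>) + \<bar>\<mu> - \<nu>\<bar> * t)"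
    unfolding b_def using t
    by (subst integral_mult_right, subst integral_add)
       (auto intro!: int_on continuous_intros u_cont v_cont)
  finally show ?thesis using A_pos[OF t] by (simp add: mult_le_cancel_left_pos)
qed

(* Continuous dependence on the spectral parameter: two solutions of the integrated equation
   with the same initial value satisfy
   |u X - v X| \<le> |mu - nu| X^2 exp ((X |mu| + 1) X), by the mean value theorem and Gronwall. *)
lemma integral_form_solution_diff:
  fixes u v A :: "real \<Rightarrow> real" and \<mu> \<nu> X :: real
  assumes A_pos: "\<And>x. x > 0 \<Longrightarrow> A x > 0" and A_nonneg: "\<And>x. x \<ge> 0 \<Longrightarrow> A x \<ge> 0"
    and A_mono: "\<And>x y. 0 \<le> x \<Longrightarrow> x \<le> y \<Longrightarrow> A x \<le> A y"
    and A_cont: "continuous_on {0..} A"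
    and u_cont: "continuous_on {0..} u" and v_cont: "continuous_on {0..} v" and uv0: "u 0 = v 0"
    and u_diff: "\<And>x. x > 0 \<Longrightarrow> u differentiable (at x)"
    and v_diff: "\<And>x. x > 0 \<Longrightarrow> v differentiable (at x)"
    and u_int: "\<And>x. x > 0 \<Longrightarrow> A x * deriv u x = -\<mu> * integral {0..x} (\<lambda>s. A s * u s)"
    and v_int: "\<And>x. x > 0 \<Longrightarrow> A x * deriv v x = -\<nu> * integral {0..x} (\<lambda>s. A s * v s)"
    and v_bound: "\<And>x. x \<ge> 0 \<Longrightarrow> \<bar>v x\<bar> \<le> 1"
    and X: "X > 0"
  shows "\<bar>u X - v X\<bar> \<le> \<bar>\<mu> - \<nu>\<bar> * X\<^sup>2 * exp ((X * \<bar>\<mu>\<bar> + 1) * X)"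
proof -
  define w where "w = (\<lambda>x. u x - v x)"
  define J where "J = (\<lambda>t. integral {0..t} (\<lambda>s. \<bar>w s\<bar>))"
  define a where "a = \<bar>\<mu> - \<nu>\<bar> * X\<^sup>2"
  define K where "K = X * \<bar>\<mu>\<bar> + 1"
  have w_cont: "continuous_on {0..} w" unfolding w_def by (intro continuous_intros u_cont v_cont)
  have absw_int: "(\<lambda>s. \<bar>w s\<bar>) integrable_on {0..t}" for t
    by (intro integrable_continuous_interval continuous_on_subset[OF w_cont] continuous_intros) auto
  have J_mono: "J z \<le> J x" if "0 \<le> z" "z \<le> x" for z x
    unfolding J_def by (rule integral_subset_le) (use that absw_int in auto)
  have J_nonneg: "J x \<ge> 0" for x unfolding J_def by (rule integral_nonneg) (use absw_int in auto)
  have w_le: "\<bar>w x\<bar> \<le> a + K * J x" if x: "x \<in> {0..X}" for x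
  proof (cases "x = 0")
    case True then show ?thesis using uv0 J_nonneg[of 0] X by (simp add: w_def a_def K_def)
  next
    case False
    then have x0: "0 < x" using x by auto
    obtain l z where z: "0 < z" "z < x" "DERIV w z :> l" "w x - w 0 = (x - 0) * l"
      using MVT[OF x0 continuous_on_subset[OF w_cont]] u_diff v_diff
      by (auto simp: w_def intro: differentiable_diff)
    have "DERIV w z :> deriv u z - deriv v z" unfolding w_def using u_diff[OF z(1)] v_diff[OF z(1)]
      by (intro DERIV_diff) (auto simp: DERIV_deriv_iff_real_differentiable)
    then have l: "l = deriv u z - deriv v z" using z(3) by (rule DERIV_unique[rotated])
    have "\<bar>w x\<bar> = x * \<bar>l\<bar>" using z(4) uv0 x0 by (simp add: w_def abs_mult)
    also have "\<dots> \<le> X * (\<bar>\<mu>\<bar> * J z + \<bar>\<mu> - \<nu>\<bar> * z)"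
      using integral_form_deriv_diff[OF A_pos A_nonneg A_mono A_cont u_cont v_cont
          u_int[OF z(1)] v_int[OF z(1)] v_bound z(1)] x x0 l J_nonneg
      by (intro mult_mono) (auto simp: J_def w_def)
    also have "\<dots> \<le> X * (\<bar>\<mu>\<bar> * J x + \<bar>\<mu> - \<nu>\<bar> * X)"
      using J_mono[of z x] z x X by (intro mult_left_mono add_mono mult_left_mono) auto
    also have "\<dots> \<le> a + K * J x"
      using J_nonneg[of x] by (simp add: a_def K_def power2_eq_square algebra_simps)
    finally show ?thesis .
  qed
  have "\<bar>w X\<bar> \<le> a * exp (K * X)"
  proof (rule gronwall_integral[where \<psi>="\<lambda>s. \<bar>w s\<bar>"])
    show "continuous_on {0..X} (\<lambda>s. \<bar>w s\<bar>)"
      by (intro continuous_intros continuous_on_subset[OF w_cont]) auto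
  qed (use w_le X in \<open>auto simp: K_def a_def J_def add_nonneg_pos\<close>)
  then show ?thesis by (simp add: w_def a_def K_def)
qed

lemma phi_joint_continuous:
  fixes A :: "real \<Rightarrow> real" and phi :: "real \<Rightarrow> real \<Rightarrow> real" and \<rho> :: real
  assumes A_pos: "\<And>x. x > 0 \<Longrightarrow> A x > 0" and A_nonneg: "\<And>x. x \<ge> 0 \<Longrightarrow> A x \<ge> 0"
    and A_mono: "\<And>x y. 0 \<le> x \<Longrightarrow> x \<le> y \<Longrightarrow> A x \<le> A y"
    and A_cont: "continuous_on {0..} A"
    and phi_cont: "\<And>l. continuous_on {0..} (phi l)" and phi_0: "\<And>l. phi l 0 = 1"
    and phi_diff: "\<And>l x. x > 0 \<Longrightarrow> phi l differentiable (at x)"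
    and phi_int: "\<And>l x. x > 0 \<Longrightarrow>
      A x * deriv (phi l) x = -(l\<^sup>2 + \<rho>\<^sup>2) * integral {0..x} (\<lambda>s. A s * phi l s)"
    and phi_bound: "\<And>l x. x \<ge> 0 \<Longrightarrow> \<bar>phi l x\<bar> \<le> 1"
  shows "continuous_on (UNIV \<times> {0<..}) (\<lambda>z. phi (fst z) (snd z))"
  unfolding continuous_on_def
proof (intro ballI)
  fix z0 assume "z0 \<in> (UNIV \<times> {0<..} :: (real \<times> real) set)"
  then obtain l x where z0: "z0 = (l, x)" "x > 0" by auto
  define S where "S = (UNIV \<times> {0<..} :: (real \<times> real) set)"
  define \<mu> where "\<mu> = l\<^sup>2 + \<rho>\<^sup>2"
  define B1 where "B1 = (\<lambda>z::real\<times>real.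
      \<bar>\<mu> - ((fst z)\<^sup>2 + \<rho>\<^sup>2)\<bar> * (snd z)\<^sup>2 * exp ((snd z * \<bar>\<mu>\<bar> + 1) * snd z))"
  define B2 where "B2 = (\<lambda>z::real\<times>real. \<bar>phi l (snd z) - phi l x\<bar>)"
  have bound: "\<bar>phi (fst z) (snd z) - phi l x\<bar> \<le> B1 z + B2 z" if "z \<in> S" for z
  proof -
    have "\<bar>phi l (snd z) - phi (fst z) (snd z)\<bar> \<le> B1 z"
      unfolding B1_def \<mu>_def using that
      by (intro integral_form_solution_diff[OF A_pos A_nonneg A_mono A_cont phi_cont phi_cont
          _ phi_diff phi_diff phi_int phi_int phi_bound]) (auto simp: S_def phi_0)
    then show ?thesis unfolding B2_def by linarith
  qed
  have "(B1 \<longlongrightarrow> B1 z0) (at z0 within S)" unfolding B1_def by (intro tendsto_intros)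
  then have B1_lim: "(B1 \<longlongrightarrow> 0) (at z0 within S)" by (simp add: B1_def z0 \<mu>_def)
  have "continuous_on S (\<lambda>z. phi l (snd z))"
    by (rule continuous_on_compose2[OF phi_cont[of l] continuous_on_snd]) (auto simp: S_def)
  then have "((\<lambda>z. phi l (snd z)) \<longlongrightarrow> phi l x) (at z0 within S)"
    using z0 unfolding continuous_on_def S_def by auto
  then have B2_lim: "(B2 \<longlongrightarrow> 0) (at z0 within S)"
    unfolding B2_def by (intro tendsto_rabs_zero) (simp add: LIM_zero)
  have "((\<lambda>z. phi (fst z) (snd z) - phi l x) \<longlongrightarrow> 0) (at z0 within S)"
  proof (rule Lim_null_comparison)
    show "\<forall>\<^sub>F z in at z0 within S. norm (phi (fst z) (snd z) - phi l x) \<le> B1 z + B2 z"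
      using bound by (auto simp: eventually_at_filter)
    show "((\<lambda>z. B1 z + B2 z) \<longlongrightarrow> 0) (at z0 within S)" using tendsto_add[OF B1_lim B2_lim] by simp
  qed
  then show "((\<lambda>z. phi (fst z) (snd z)) \<longlongrightarrow> phi (fst z0) (snd z0)) (at z0 within UNIV \<times> {0<..})"
    using z0 by (simp add: LIM_zero_iff S_def)
qed

(* Functions on R_+ are represented by functions on R whose negative part is irrelevant;
   restricting to ]0,+oo[ (extension by 0) changes none of the weighted quantities. *)
definition restrict_pos :: "(real \<Rightarrow> 'a::real_vector) \<Rightarrow> real \<Rightarrow> 'a" where
  "restrict_pos g = (\<lambda>x. indicator {0<..} x *\<^sub>R g x)"

lemma restrict_pos_measurable_cont:
  fixes g :: "real \<Rightarrow> 'b::real_normed_vector"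
  assumes "continuous_on {0..} g"
  shows "restrict_pos g \<in> borel_measurable lborel"
proof -
  have "continuous_on {0<..} g" by (rule continuous_on_subset[OF assms]) auto
  from borel_measurable_continuous_on_indicator[OF _ this] show ?thesis
    by (simp add: restrict_pos_def)
qed

lemma Lp_w_measurable: "Lp_w p W f \<Longrightarrow> restrict_pos f \<in> borel_measurable lborel"
  unfolding Lp_w_def set_borel_measurable_def restrict_pos_def by simp

lemma normp_w_restrict_pos: "normp_w q W (restrict_pos g) = normp_w q W g"
  and normp_w_restrict_weight: "normp_w q (restrict_pos W) g = normp_w q W g"
  unfolding normp_w_def by (auto intro!: nn_integral_cong simp: indicator_def restrict_pos_def)

lemma Lp_w_restrict_pos: "Lp_w q W (restrict_pos g) \<longleftrightarrow> Lp_w q W g"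
proof -
  have "(\<lambda>x. indicator {0<..} x *\<^sub>R restrict_pos g x) = (\<lambda>x. indicator {0<..} x *\<^sub>R g x)"
    by (auto simp: restrict_pos_def indicator_def fun_eq_iff)
  then show ?thesis using normp_w_restrict_pos[of q W g]
    unfolding Lp_w_def normp_w_def set_borel_measurable_def by simp
qed

lemma Lp_w_restrict_weight: "Lp_w q (restrict_pos W) g \<longleftrightarrow> Lp_w q W g"
  using normp_w_restrict_weight[of q W g] unfolding Lp_w_def normp_w_def by simp

lemma FT_restrict_pos: "FT A phi (restrict_pos g) = FT A phi g"
  unfolding FT_def set_lebesgue_integral_def
  by (intro ext Bochner_Integration.integral_cong) (auto simp: indicator_def restrict_pos_def)

lemma FT_integrand_integrable:
  fixes A :: "real \<Rightarrow> real" and phi :: "real \<Rightarrow> real \<Rightarrow> real" and f :: "real \<Rightarrow> complex"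
  assumes A_nonneg: "\<And>x. x \<ge> 0 \<Longrightarrow> A x \<ge> 0" and A_cont: "continuous_on {0..} A"
    and phi_cont: "continuous_on {0..} (phi l)"
    and phi_bound: "\<And>x. x \<ge> 0 \<Longrightarrow> \<bar>phi l x\<bar> \<le> 1"
    and f: "Lp_w 1 A f"
  shows "set_integrable lborel {0<..} (\<lambda>x. f x * complex_of_real (phi l x * A x))"
proof -
  have [measurable]: "restrict_pos f \<in> borel_measurable lborel"
    "restrict_pos (phi l) \<in> borel_measurable lborel" "restrict_pos A \<in> borel_measurable lborel"
    using Lp_w_measurable[OF f] restrict_pos_measurable_cont[OF phi_cont]
      restrict_pos_measurable_cont[OF A_cont] by auto
  have "(\<lambda>x. indicator {0<..} x *\<^sub>R (f x * complex_of_real (phi l x * A x)))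
      = (\<lambda>x. restrict_pos f x * complex_of_real (restrict_pos (phi l) x * restrict_pos A x))"
    by (auto simp: fun_eq_iff indicator_def restrict_pos_def)
  also have "\<dots> \<in> borel_measurable lborel" by measurable
  finally have meas: "(\<lambda>x. indicator {0<..} x *\<^sub>R (f x * complex_of_real (phi l x * A x)))
      \<in> borel_measurable lborel" .
  have "(\<integral>\<^sup>+ x. ennreal (norm (indicator {0<..} x *\<^sub>R (f x * complex_of_real (phi l x * A x)))) \<partial>lborel)
       \<le> (\<integral>\<^sup>+ x\<in>{0<..}. ennreal (cmod (f x) powr 1 * A x) \<partial>lborel)"
  proof (intro nn_integral_mono)
    fix x :: real
    have "x > 0 \<Longrightarrow> cmod (f x) * (\<bar>phi l x\<bar> * \<bar>A x\<bar>) \<le> cmod (f x) * A x"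
      using phi_bound[of x] A_nonneg[of x] by (intro mult_left_mono) (auto simp: mult_left_le_one_le)
    then show "ennreal (norm (indicator {0<..} x *\<^sub>R (f x * complex_of_real (phi l x * A x))))
       \<le> ennreal (cmod (f x) powr 1 * A x) * indicator {0<..} x"
      by (cases "x > 0") (auto simp: norm_mult abs_mult intro!: ennreal_leI)
  qed
  also have "\<dots> < \<infinity>" using f by (simp add: Lp_w_def)
  finally show ?thesis unfolding set_integrable_def
    by (subst integrable_iff_bounded) (use meas in auto)
qed

lemma FT_add:
  fixes A :: "real \<Rightarrow> real" and phi :: "real \<Rightarrow> real \<Rightarrow> real" and f g :: "real \<Rightarrow> complex"
  assumes "set_integrable lborel {0<..} (\<lambda>x. f x * complex_of_real (phi l x * A x))"
    and "set_integrable lborel {0<..} (\<lambda>x. g x * complex_of_real (phi l x * A x))"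
  shows "FT A phi (\<lambda>x. f x + g x) l = FT A phi f l + FT A phi g l"
  unfolding FT_def using set_integral_add(2)[OF assms] by (simp add: distrib_right)

lemma FT_measurable:
  fixes A :: "real \<Rightarrow> real" and phi :: "real \<Rightarrow> real \<Rightarrow> real" and f :: "real \<Rightarrow> complex"
  assumes A_cont: "continuous_on {0..} A"
    and phi_cont: "continuous_on (UNIV \<times> {0<..}) (\<lambda>z. phi (fst z) (snd z))"
    and f: "Lp_w p A f"
  shows "FT A phi f \<in> borel_measurable lborel"
proof -
  have [measurable]: "restrict_pos f \<in> borel_measurable lborel" "restrict_pos A \<in> borel_measurable lborel"
    using Lp_w_measurable[OF f] restrict_pos_measurable_cont[OF A_cont] by auto
  have "(\<lambda>z. indicator (UNIV \<times> {0<..}) z *\<^sub>R phi (fst z) (snd z)) \<in> borel_measurable borel"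
    by (rule borel_measurable_continuous_on_indicator[OF _ phi_cont]) (intro borel_open open_Times, auto)
  then have [measurable]: "(\<lambda>z. indicator (UNIV \<times> {0<..}) z * phi (fst z) (snd z))
      \<in> borel_measurable (lborel \<Otimes>\<^sub>M lborel)"
    by (simp add: lborel_prod)
  define F where "F = (\<lambda>z. restrict_pos f (snd z) * complex_of_real
      ((indicator (UNIV \<times> {0<..}) z * phi (fst z) (snd z)) * restrict_pos A (snd z)))"
  have "F \<in> borel_measurable (lborel \<Otimes>\<^sub>M lborel)" unfolding F_def by measurable
  then have "(\<lambda>l. \<integral>x. F (l, x) \<partial>lborel) \<in> borel_measurable lborel"
    by (intro lborel.borel_measurable_lebesgue_integral) simp
  moreover have "FT A phi f = (\<lambda>l. \<integral>x. F (l, x) \<partial>lborel)"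
    unfolding FT_def set_lebesgue_integral_def F_def
    by (intro ext Bochner_Integration.integral_cong) (auto simp: indicator_def restrict_pos_def)
  ultimately show ?thesis by simp
qed

lemma nn_integral_powr_from_0:
  fixes a e :: real
  assumes "a \<ge> 0" "e > -1"
  shows "(\<integral>\<^sup>+ t. ennreal (t powr e) * indicator {0..a} t \<partial>lborel) = ennreal (a powr (e+1) / (e+1))"
  using assms by (intro nn_integral_has_integral_lebesgue' has_integral_powr_from_0) auto

lemma nn_integral_powr_to_inf:
  fixes a e :: real
  assumes "a > 0" "e < -1"
  shows "(\<integral>\<^sup>+ t. ennreal (t powr e) * indicator {a..} t \<partial>lborel) = ennreal (a powr (e+1) / -(e+1))"
proof -
  have "((\<lambda>t. t powr e) has_integral -(a powr (e+1)) / (e+1)) {a..}"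
    using assms by (intro has_integral_powr_to_inf) auto
  then show ?thesis by (intro nn_integral_has_integral_lebesgue') (auto simp: minus_divide_right)
qed

lemma layer_cake_powr:
  fixes s p :: real
  assumes s: "s \<ge> 0" and p: "p > 0"
  shows "ennreal (s powr p) = (\<integral>\<^sup>+ t. ennreal (p * t powr (p-1)) * indicator {0<..} t * indicator {..s} t \<partial>lborel)"
proof -
  have "(\<integral>\<^sup>+ t. ennreal (p * t powr (p-1)) * indicator {0<..} t * indicator {..s} t \<partial>lborel)
      = (\<integral>\<^sup>+ t. ennreal p * (ennreal (t powr (p-1)) * indicator {0..s} t) \<partial>lborel)"
    using p by (intro nn_integral_cong) (auto simp: indicator_def ennreal_mult)
  also have "\<dots> = ennreal p * ennreal (s powr p / p)"
    using nn_integral_powr_from_0[OF s, of "p-1"] p by (subst nn_integral_cmult) auto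
  also have "\<dots> = ennreal (s powr p)" using p by (simp add: ennreal_mult[symmetric])
  finally show ?thesis ..
qed

lemma weighted_layer_cake:
  fixes om :: "real \<Rightarrow> ennreal" and s :: "real \<Rightarrow> real" and p :: real
  assumes [measurable]: "om \<in> borel_measurable lborel" "s \<in> borel_measurable lborel"
    and s: "\<And>x. s x \<ge> 0" and p: "p > 0"
  shows "(\<integral>\<^sup>+ x. om x * ennreal (s x powr p) \<partial>lborel)
    = (\<integral>\<^sup>+ t. ennreal (p * t powr (p-1)) * indicator {0<..} t *
         (\<integral>\<^sup>+ x. om x * indicator {x. t \<le> s x} x \<partial>lborel) \<partial>lborel)"
proof -
  define F where "F = (\<lambda>x t. om x * (ennreal (p * t powr (p-1)) * indicator {0<..} t *
      (if t \<le> s x then 1 else 0)))"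
  have F_meas: "case_prod F \<in> borel_measurable (lborel \<Otimes>\<^sub>M lborel)"
    unfolding F_def by measurable
  have "(\<integral>\<^sup>+ x. om x * ennreal (s x powr p) \<partial>lborel) = (\<integral>\<^sup>+ x. \<integral>\<^sup>+ t. F x t \<partial>lborel \<partial>lborel)"
    unfolding F_def layer_cake_powr[OF s p]
    by (intro nn_integral_cong, subst nn_integral_cmult[symmetric])
       (auto intro!: nn_integral_cong simp: indicator_def)
  also have "\<dots> = (\<integral>\<^sup>+ t. \<integral>\<^sup>+ x. F x t \<partial>lborel \<partial>lborel)"
    by (rule lborel_pair.Fubini'[OF F_meas, symmetric])
  also have "\<dots> = (\<integral>\<^sup>+ t. ennreal (p * t powr (p-1)) * indicator {0<..} t *
         (\<integral>\<^sup>+ x. om x * indicator {x. t \<le> s x} x \<partial>lborel) \<partial>lborel)"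
    unfolding F_def
    by (intro nn_integral_cong, subst nn_integral_cmult[symmetric])
       (auto intro!: nn_integral_cong simp: indicator_def ac_simps)
  finally show ?thesis .
qed

definition large_part :: "real \<Rightarrow> (real \<Rightarrow> complex) \<Rightarrow> real \<Rightarrow> complex" where
  "large_part t f x = (if t < cmod (f x) then f x else 0)"

definition small_part :: "real \<Rightarrow> (real \<Rightarrow> complex) \<Rightarrow> real \<Rightarrow> complex" where
  "small_part t f x = (if t < cmod (f x) then 0 else f x)"

lemma large_plus_small_part: "(\<lambda>x. large_part t f x + small_part t f x) = f"
  by (auto simp: large_part_def small_part_def)

lemma large_part_measurable [measurable]:
  assumes [measurable]: "f \<in> borel_measurable M"
  shows "large_part t f \<in> borel_measurable M"
  unfolding large_part_def by measurable

lemma small_part_measurable [measurable]: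
  assumes [measurable]: "f \<in> borel_measurable M"
  shows "small_part t f \<in> borel_measurable M"
  unfolding small_part_def by measurable

lemma small_part_as_truncation:
  "small_part t f = (\<lambda>x. if \<not> t < cmod (f x) then f x else 0)"
  by (auto simp: small_part_def)

lemma nn_integral_truncation_norms:
  fixes f :: "real \<Rightarrow> complex" and A :: "real \<Rightarrow> real" and \<kappa> :: "real \<Rightarrow> ennreal"
    and S :: "real \<Rightarrow> real \<Rightarrow> bool"
  assumes [measurable]: "f \<in> borel_measurable lborel" "A \<in> borel_measurable lborel"
    "\<kappa> \<in> borel_measurable lborel" "Measurable.pred (lborel \<Otimes>\<^sub>M lborel) (\<lambda>z. S (fst z) (cmod (f (snd z))))"
  shows "(\<integral>\<^sup>+ t. \<kappa> t * normp_w r A (\<lambda>x. if S t (cmod (f x)) then f x else 0) \<partial>lborel)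
    = (\<integral>\<^sup>+ x\<in>{0<..}. (\<integral>\<^sup>+ t. \<kappa> t * indicator {t. S t (cmod (f x))} t \<partial>lborel) *
         ennreal (cmod (f x) powr r * A x) \<partial>lborel)"
proof -
  define F where "F = (\<lambda>t x. \<kappa> t * (if S t (cmod (f x)) then 1 else 0) *
      (ennreal (cmod (f x) powr r * A x) * indicator {0<..} x))"
  have F_meas: "case_prod F \<in> borel_measurable (lborel \<Otimes>\<^sub>M lborel)"
    unfolding F_def by measurable
  have [measurable]: "Measurable.pred lborel (\<lambda>x. S t (cmod (f x)))" for t
    using measurable_Pair2[OF assms(4), of t] by simp
  have [measurable]: "Measurable.pred lborel (\<lambda>t. S t (cmod (f x)))" for x
    using measurable_Pair1[OF assms(4), of x] by simp
  have "(\<integral>\<^sup>+ t. \<kappa> t * normp_w r A (\<lambda>x. if S t (cmod (f x)) then f x else 0) \<partial>lborel)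
      = (\<integral>\<^sup>+ t. \<integral>\<^sup>+ x. F t x \<partial>lborel \<partial>lborel)"
    unfolding normp_w_def F_def
    by (intro nn_integral_cong, subst nn_integral_cmult[symmetric]) (auto intro!: nn_integral_cong)
  also have "\<dots> = (\<integral>\<^sup>+ x. \<integral>\<^sup>+ t. F t x \<partial>lborel \<partial>lborel)"
    using lborel_pair.Fubini'[OF F_meas] by simp
  also have "\<dots> = (\<integral>\<^sup>+ x\<in>{0<..}. (\<integral>\<^sup>+ t. \<kappa> t * indicator {t. S t (cmod (f x))} t \<partial>lborel) *
         ennreal (cmod (f x) powr r * A x) \<partial>lborel)"
    unfolding F_def
    by (intro nn_integral_cong, subst nn_integral_multc[symmetric])
       (auto intro!: nn_integral_cong simp: indicator_def ac_simps)
  finally show ?thesis .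
qed

lemma normp_w_truncation_measurable:
  fixes f :: "real \<Rightarrow> complex" and A :: "real \<Rightarrow> real" and S :: "real \<Rightarrow> real \<Rightarrow> bool"
  assumes [measurable]: "f \<in> borel_measurable lborel" "A \<in> borel_measurable lborel"
    "Measurable.pred (lborel \<Otimes>\<^sub>M lborel) (\<lambda>z. S (fst z) (cmod (f (snd z))))"
  shows "(\<lambda>t. normp_w r A (\<lambda>x. if S t (cmod (f x)) then f x else 0)) \<in> borel_measurable lborel"
proof -
  define F where "F = (\<lambda>t x. ennreal (cmod (if S t (cmod (f x)) then f x else 0) powr r * A x) *
      indicator {0<..} x)"
  have "case_prod F \<in> borel_measurable (lborel \<Otimes>\<^sub>M lborel)" unfolding F_def by measurable
  from lborel.borel_measurable_nn_integral[OF this]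
  show ?thesis by (simp add: normp_w_def F_def)
qed

lemma normp_w_parts_measurable:
  assumes [measurable]: "f \<in> borel_measurable lborel" "A \<in> borel_measurable lborel"
  shows "(\<lambda>t. normp_w r A (large_part t f)) \<in> borel_measurable lborel"
    and "(\<lambda>t. normp_w r A (small_part t f)) \<in> borel_measurable lborel"
  unfolding large_part_def small_part_as_truncation
proof -
  show "(\<lambda>t. normp_w r A (\<lambda>x. if t < cmod (f x) then f x else 0)) \<in> borel_measurable lborel"
    by (rule normp_w_truncation_measurable[where S="\<lambda>t a. t < a"]; measurable)
  show "(\<lambda>t. normp_w r A (\<lambda>x. if \<not> t < cmod (f x) then f x else 0)) \<in> borel_measurable lborel"
    by (rule normp_w_truncation_measurable[where S="\<lambda>t a. \<not> t < a"]; measurable)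
qed

lemma nn_integral_powr_below:
  fixes a p :: real
  assumes a: "a \<ge> 0" and p: "p > 1"
  shows "(\<integral>\<^sup>+ t. ennreal (t powr (p-2)) * indicator {0<..} t * indicator {t. t < a} t \<partial>lborel)
    \<le> ennreal (a powr (p-1) / (p-1))"
proof -
  have "(\<integral>\<^sup>+ t. ennreal (t powr (p-2)) * indicator {0<..} t * indicator {t. t < a} t \<partial>lborel)
      \<le> (\<integral>\<^sup>+ t. ennreal (t powr (p-2)) * indicator {0..a} t \<partial>lborel)"
    by (intro nn_integral_mono) (auto simp: indicator_def)
  also have "\<dots> = ennreal (a powr (p-1) / (p-1))"
    using nn_integral_powr_from_0[OF a, of "p-2"] p by simp
  finally show ?thesis .
qed

lemma nn_integral_powr_above:
  fixes a p :: real
  assumes a: "a > 0" and p: "p < 2"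
  shows "(\<integral>\<^sup>+ t. ennreal (t powr (p-3)) * indicator {0<..} t * indicator {t. \<not> t < a} t \<partial>lborel)
    = ennreal (a powr (p-2) / (2-p))"
proof -
  have "(\<integral>\<^sup>+ t. ennreal (t powr (p-3)) * indicator {0<..} t * indicator {t. \<not> t < a} t \<partial>lborel)
      = (\<integral>\<^sup>+ t. ennreal (t powr (p-3)) * indicator {a..} t \<partial>lborel)"
    using a by (intro nn_integral_cong) (auto simp: indicator_def)
  also have "\<dots> = ennreal (a powr (p-2) / (2-p))"
    using nn_integral_powr_to_inf[OF a, of "p-3"] p by simp
  finally show ?thesis .
qed

lemma large_part_norms_integral:
  fixes f :: "real \<Rightarrow> complex" and A :: "real \<Rightarrow> real" and p :: real
  assumes [measurable]: "f \<in> borel_measurable lborel" "A \<in> borel_measurable lborel"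
    and A_nonneg: "\<And>x. A x \<ge> 0" and p: "p > 1"
  shows "(\<integral>\<^sup>+ t. ennreal (t powr (p-2)) * indicator {0<..} t * normp_w 1 A (large_part t f) \<partial>lborel)
    \<le> ennreal (1/(p-1)) * normp_w p A f"
proof -
  have "(\<integral>\<^sup>+ t. ennreal (t powr (p-2)) * indicator {0<..} t * normp_w 1 A (large_part t f) \<partial>lborel)
      = (\<integral>\<^sup>+ x\<in>{0<..}. (\<integral>\<^sup>+ t. ennreal (t powr (p-2)) * indicator {0<..} t *
           indicator {t. t < cmod (f x)} t \<partial>lborel) * ennreal (cmod (f x) powr 1 * A x) \<partial>lborel)"
    unfolding large_part_def
    by (rule nn_integral_truncation_norms[where S="\<lambda>t a. t < a"]) measurable
  also have "\<dots> \<le> (\<integral>\<^sup>+ x\<in>{0<..}. ennreal (1/(p-1)) * ennreal (cmod (f x) powr p * A x) \<partial>lborel)"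
  proof (intro nn_integral_mono mult_right_mono)
    fix x
    define a where "a = cmod (f x)"
    have "a * a powr (p-1) = a powr p"
      using p by (cases "a = 0") (auto simp: a_def powr_mult_base)
    then have eq: "ennreal (a powr (p-1) / (p-1)) * ennreal (a powr 1 * A x)
        = ennreal (1/(p-1)) * ennreal (a powr p * A x)"
      using p A_nonneg[of x] by (simp add: a_def ennreal_mult[symmetric] field_simps)
    have "(\<integral>\<^sup>+ t. ennreal (t powr (p-2)) * indicator {0<..} t * indicator {t. t < a} t \<partial>lborel) *
        ennreal (a powr 1 * A x) \<le> ennreal (a powr (p-1) / (p-1)) * ennreal (a powr 1 * A x)"
      using nn_integral_powr_below[of a p] p by (intro mult_right_mono) (auto simp: a_def)
    then show "(\<integral>\<^sup>+ t. ennreal (t powr (p-2)) * indicator {0<..} t * indicator {t. t < cmod (f x)} t \<partial>lborel) *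
        ennreal (cmod (f x) powr 1 * A x) \<le> ennreal (1/(p-1)) * ennreal (cmod (f x) powr p * A x)"
      unfolding a_def[symmetric] eq .
  qed simp
  also have "\<dots> = ennreal (1/(p-1)) * normp_w p A f"
    unfolding normp_w_def by (subst nn_integral_cmult[symmetric]) (auto simp: ac_simps)
  finally show ?thesis .
qed

lemma small_part_norms_integral:
  fixes f :: "real \<Rightarrow> complex" and A :: "real \<Rightarrow> real" and p :: real
  assumes [measurable]: "f \<in> borel_measurable lborel" "A \<in> borel_measurable lborel"
    and A_nonneg: "\<And>x. A x \<ge> 0" and p: "p < 2"
  shows "(\<integral>\<^sup>+ t. ennreal (t powr (p-3)) * indicator {0<..} t * normp_w 2 A (small_part t f) \<partial>lborel)
    \<le> ennreal (1/(2-p)) * normp_w p A f"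
proof -
  have "(\<integral>\<^sup>+ t. ennreal (t powr (p-3)) * indicator {0<..} t * normp_w 2 A (small_part t f) \<partial>lborel)
      = (\<integral>\<^sup>+ x\<in>{0<..}. (\<integral>\<^sup>+ t. ennreal (t powr (p-3)) * indicator {0<..} t *
           indicator {t. \<not> t < cmod (f x)} t \<partial>lborel) * ennreal (cmod (f x) powr 2 * A x) \<partial>lborel)"
    unfolding small_part_as_truncation
    by (rule nn_integral_truncation_norms[where S="\<lambda>t a. \<not> t < a"]) measurable
  also have "\<dots> \<le> (\<integral>\<^sup>+ x\<in>{0<..}. ennreal (1/(2-p)) * ennreal (cmod (f x) powr p * A x) \<partial>lborel)"
  proof (intro nn_integral_mono mult_right_mono)
    fix x
    define a where "a = cmod (f x)"
    show "(\<integral>\<^sup>+ t. ennreal (t powr (p-3)) * indicator {0<..} t * indicator {t. \<not> t < cmod (f x)} t \<partial>lborel) *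
        ennreal (cmod (f x) powr 2 * A x) \<le> ennreal (1/(2-p)) * ennreal (cmod (f x) powr p * A x)"
    proof (cases "a = 0")
      case False
      then have a: "a > 0" by (simp add: a_def)
      have "a powr 2 * a powr (p-2) = a powr (2 + (p-2))" by (rule powr_add[symmetric])
      then have "a powr 2 * a powr (p-2) = a powr p" by simp
      then have "ennreal (a powr (p-2) / (2-p)) * ennreal (a powr 2 * A x)
          = ennreal (1/(2-p)) * ennreal (a powr p * A x)"
        using p A_nonneg[of x] by (simp add: ennreal_mult[symmetric] field_simps)
      then show ?thesis unfolding a_def[symmetric] nn_integral_powr_above[OF a p] by simp
    qed (simp add: a_def)
  qed simp
  also have "\<dots> = ennreal (1/(2-p)) * normp_w p A f"
    unfolding normp_w_def by (subst nn_integral_cmult[symmetric]) (auto simp: ac_simps)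
  finally show ?thesis .
qed

lemma Lp_w_1_dominated:
  fixes f g :: "real \<Rightarrow> complex" and A :: "real \<Rightarrow> real"
  assumes [measurable]: "g \<in> borel_measurable lborel" and A_nonneg: "\<And>x. A x \<ge> 0"
    and f: "Lp_w 1 A f" and le: "\<And>x. cmod (g x) \<le> cmod (f x)"
  shows "Lp_w 1 A g"
  unfolding Lp_w_def set_borel_measurable_def
proof
  show "(\<lambda>x. indicator {0<..} x *\<^sub>R g x) \<in> borel_measurable lborel" by measurable
  have "(\<integral>\<^sup>+ x\<in>{0<..}. ennreal (cmod (g x) powr 1 * A x) \<partial>lborel)
      \<le> (\<integral>\<^sup>+ x\<in>{0<..}. ennreal (cmod (f x) powr 1 * A x) \<partial>lborel)"
    using le A_nonneg by (intro nn_integral_mono) (auto simp: indicator_def intro!: ennreal_leI mult_right_mono)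
  also have "\<dots> < \<infinity>" using f by (simp add: Lp_w_def)
  finally show "(\<integral>\<^sup>+ x\<in>{0<..}. ennreal (cmod (g x) powr 1 * A x) \<partial>lborel) < \<infinity>" .
qed

(* For p \<le> 2 the small part of an L^p_A function lies in L^2_A:
   |f_t|^2 \<le> t^(2-p) |f|^p. *)
lemma Lp_w_2_small_part:
  fixes f :: "real \<Rightarrow> complex" and A :: "real \<Rightarrow> real"
  assumes [measurable]: "f \<in> borel_measurable lborel" "A \<in> borel_measurable lborel"
    and A_nonneg: "\<And>x. A x \<ge> 0" and f: "Lp_w p A f" and p: "p \<le> 2"
  shows "Lp_w 2 A (small_part t f)"
  unfolding Lp_w_def set_borel_measurable_def
proof
  show "(\<lambda>x. indicator {0<..} x *\<^sub>R small_part t f x) \<in> borel_measurable lborel" by measurable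
  have pointwise: "cmod (small_part t f x) powr 2 * A x \<le> t powr (2-p) * (cmod (f x) powr p * A x)" for x
  proof (cases "t < cmod (f x)")
    case False
    define a where "a = cmod (f x)"
    have a: "a \<ge> 0" "a \<le> t" using False by (auto simp: a_def)
    have "a powr 2 = a powr (2-p) * a powr p"
      using a by (cases "a = 0") (auto simp: powr_add[symmetric])
    also have "\<dots> \<le> t powr (2-p) * a powr p" using a p by (intro mult_right_mono powr_mono2) auto
    finally have "a powr 2 * A x \<le> t powr (2-p) * a powr p * A x"
      using A_nonneg[of x] by (intro mult_right_mono)
    then show ?thesis using False a by (simp add: small_part_def a_def mult.assoc)
  qed (simp add: small_part_def A_nonneg)
  have "(\<integral>\<^sup>+ x\<in>{0<..}. ennreal (cmod (small_part t f x) powr 2 * A x) \<partial>lborel)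
      \<le> (\<integral>\<^sup>+ x\<in>{0<..}. ennreal (t powr (2-p)) * ennreal (cmod (f x) powr p * A x) \<partial>lborel)"
    using pointwise A_nonneg
    by (intro nn_integral_mono) (auto simp: indicator_def ennreal_mult[symmetric] intro!: ennreal_leI)
  also have "\<dots> = ennreal (t powr (2-p)) * normp_w p A f"
    unfolding normp_w_def by (subst nn_integral_cmult[symmetric]) (auto simp: mult.assoc)
  also have "\<dots> < \<infinity>" using f by (simp add: Lp_w_def normp_w_def ennreal_mult_less_top)
  finally show "(\<integral>\<^sup>+ x\<in>{0<..}. ennreal (cmod (small_part t f x) powr 2 * A x) \<partial>lborel) < \<infinity>" .
qed

(* If t \<le> g (n + c), then either the first summand already reaches t/2 or the second one
   carries the rest: w / g^2 \<le> 4/t^2 c^2 w  (Chebyshev at level t/2). *)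
lemma level_split:
  fixes t g n c w :: real
  assumes "t \<le> g * (n + c)" "g > 0" "t > 0" "w \<ge> 0" "c \<ge> 0" "\<not> t/2 \<le> g * n"
  shows "w / g\<^sup>2 \<le> 4/t\<^sup>2 * (c\<^sup>2 * w)"
proof -
  have "t \<le> 2 * g * c" using assms by (simp add: distrib_left)
  then have "t\<^sup>2 \<le> (2 * g * c)\<^sup>2" using assms by (intro power_mono) auto
  then have "1 \<le> (2 * g * c)\<^sup>2 / t\<^sup>2" using assms by simp
  then have "w / g\<^sup>2 \<le> w / g\<^sup>2 * ((2 * g * c)\<^sup>2 / t\<^sup>2)"
    using assms by (metis divide_nonneg_nonneg mult.right_neutral mult_left_mono zero_le_power2)
  also have "\<dots> = 4/t\<^sup>2 * (c\<^sup>2 * w)" using assms by (simp add: field_simps power2_eq_square)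
  finally show ?thesis .
qed

locale pitt_interpolation =
  fixes T :: "(real \<Rightarrow> complex) \<Rightarrow> real \<Rightarrow> complex" and A W G :: "real \<Rightarrow> real" and C1 :: real
  assumes C1_nonneg: "C1 \<ge> 0"
    and A_meas [measurable]: "A \<in> borel_measurable lborel" and A_nonneg: "\<And>x. A x \<ge> 0"
    and W_meas [measurable]: "W \<in> borel_measurable lborel" and W_nonneg: "\<And>x. W x \<ge> 0"
    and G_meas [measurable]: "G \<in> borel_measurable lborel" and G_pos: "\<And>x. x > 0 \<Longrightarrow> G x > 0"
    and T_meas: "\<And>f. f \<in> borel_measurable lborel \<Longrightarrow> Lp_w 1 A f \<Longrightarrow> T f \<in> borel_measurable lborel"
    and T_L1: "\<And>f l. Lp_w 1 A f \<Longrightarrow> ennreal (cmod (T f l)) \<le> normp_w 1 A f"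
    and T_L2: "\<And>f. Lp_w 1 A f \<Longrightarrow> Lp_w 2 A f \<Longrightarrow> normp_w 2 W (T f) \<le> normp_w 2 A f"
    and T_add: "\<And>f g l. Lp_w 1 A f \<Longrightarrow> Lp_w 1 A g \<Longrightarrow> T (\<lambda>x. f x + g x) l = T f l + T g l"
    and G_weak: "\<And>c t. c \<ge> 0 \<Longrightarrow> t > 0 \<Longrightarrow>
      (\<integral>\<^sup>+ x\<in>{0<..}. ennreal (W x / (G x)\<^sup>2) * indicator {x. t \<le> G x * c} x \<partial>lborel) \<le> ennreal (C1 * c / t)"
begin

(* Distribution estimate: the W/G^2-measure of {G |T f| \<ge> t} is controlled by the L^1 norm of
   the large part (through G_weak) and the L^2 norm of the small part (through Chebyshev). *)
lemma distribution_bound: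
  assumes [measurable]: "f \<in> borel_measurable lborel"
    and f1: "Lp_w 1 A f" and fp: "Lp_w p A f" and p: "p \<le> 2" and t: "t > 0"
  shows "(\<integral>\<^sup>+ x\<in>{0<..}. ennreal (W x / (G x)\<^sup>2) * indicator {x. t \<le> G x * cmod (T f x)} x \<partial>lborel)
     \<le> ennreal (2*C1/t) * normp_w 1 A (large_part t f) + ennreal (4/t\<^sup>2) * normp_w 2 A (small_part t f)"
proof -
  define f_large f_small where "f_large = large_part t f" and "f_small = small_part t f"
  have L1: "Lp_w 1 A f_large" "Lp_w 1 A f_small" unfolding f_large_def f_small_def
    by (rule Lp_w_1_dominated[OF _ A_nonneg f1], measurable, simp add: large_part_def,
        rule Lp_w_1_dominated[OF _ A_nonneg f1], measurable, simp add: small_part_def)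
  have L2: "Lp_w 2 A f_small" unfolding f_small_def by (rule Lp_w_2_small_part[OF _ _ A_nonneg fp p]) simp_all
  have [measurable]: "T f_small \<in> borel_measurable lborel" using T_meas L1 by (simp add: f_small_def)
  obtain n1 where n1: "normp_w 1 A f_large = ennreal n1" "n1 \<ge> 0"
  proof -
    have "normp_w 1 A f_large < \<infinity>" using L1(1) by (simp add: Lp_w_def normp_w_def)
    then show ?thesis using that by (cases "normp_w 1 A f_large") auto
  qed
  have T_large_bound: "cmod (T f_large y) \<le> n1" for y using T_L1[OF L1(1), of y] n1 by (simp add: ennreal_le_iff)
  have pointwise: "ennreal (W x / (G x)\<^sup>2) * indicator {x. t \<le> G x * cmod (T f x)} x * indicator {0<..} x
      \<le> ennreal (W x / (G x)\<^sup>2) * indicator {x. t/2 \<le> G x * n1} x * indicator {0<..} x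
        + ennreal (4/t\<^sup>2) * (ennreal (cmod (T f_small x) powr 2 * W x) * indicator {0<..} x)" for x
  proof (cases "x > 0 \<and> t \<le> G x * cmod (T f x) \<and> \<not> t/2 \<le> G x * n1")
    case True
    have "T f x = T f_large x + T f_small x"
      using T_add[OF L1] large_plus_small_part[of t f] by (simp add: f_large_def f_small_def)
    then have "G x * cmod (T f x) \<le> G x * (n1 + cmod (T f_small x))"
      using G_pos[of x] True T_large_bound[of x] norm_triangle_ineq[of "T f_large x" "T f_small x"]
      by (intro mult_left_mono) auto
    then have "t \<le> G x * (n1 + cmod (T f_small x))" using True by linarith
    then have "W x / (G x)\<^sup>2 \<le> 4/t\<^sup>2 * ((cmod (T f_small x))\<^sup>2 * W x)"
      using True G_pos[of x] t W_nonneg[of x] by (intro level_split[where n=n1]) auto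
    then show ?thesis
      using True W_nonneg[of x] by (simp add: ennreal_mult[symmetric] ennreal_leI indicator_def)
  qed (auto simp: indicator_def)
  have "(\<integral>\<^sup>+ x\<in>{0<..}. ennreal (W x / (G x)\<^sup>2) * indicator {x. t \<le> G x * cmod (T f x)} x \<partial>lborel)
     \<le> (\<integral>\<^sup>+ x\<in>{0<..}. ennreal (W x / (G x)\<^sup>2) * indicator {x. t/2 \<le> G x * n1} x \<partial>lborel)
        + ennreal (4/t\<^sup>2) * normp_w 2 W (T f_small)"
    unfolding normp_w_def using pointwise
    by (subst nn_integral_cmult[symmetric], measurable, subst nn_integral_add[symmetric])
       (auto intro!: nn_integral_mono)
  also have "\<dots> \<le> ennreal (C1 * n1 / (t/2)) + ennreal (4/t\<^sup>2) * normp_w 2 A f_small"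
    using G_weak[OF n1(2), of "t/2"] T_L2[OF L1(2) L2] t by (intro add_mono mult_left_mono) auto
  also have "ennreal (C1 * n1 / (t/2)) = ennreal (2*C1/t) * normp_w 1 A f_large"
    unfolding n1 using t C1_nonneg n1 by (simp add: ennreal_mult[symmetric] field_simps)
  finally show ?thesis by (simp add: f_large_def f_small_def)
qed

lemma level_estimate:
  assumes [measurable]: "f \<in> borel_measurable lborel"
    and f1: "Lp_w 1 A f" and fp: "Lp_w p A f" and p: "0 < p" "p \<le> 2" and t: "t > 0"
  shows "ennreal (p * t powr (p-1)) *
      (\<integral>\<^sup>+ x\<in>{0<..}. ennreal (W x / (G x)\<^sup>2) * indicator {x. t \<le> G x * cmod (T f x)} x \<partial>lborel)
    \<le> ennreal (2*C1*p) * (ennreal (t powr (p-2)) * normp_w 1 A (large_part t f))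
      + ennreal (4*p) * (ennreal (t powr (p-3)) * normp_w 2 A (small_part t f))"
proof -
  have "t powr (p-2) * t powr 1 = t powr (p-1)" "t powr (p-3) * t powr 2 = t powr (p-1)"
    by (subst powr_add[symmetric], simp)+
  then have "t powr (p-1) = t powr (p-2) * t" "t powr (p-1) = t powr (p-3) * t\<^sup>2"
    using t by (simp_all add: powr_numeral)
  then have c1: "ennreal (p * t powr (p-1)) * ennreal (2*C1/t) = ennreal (2*C1*p) * ennreal (t powr (p-2))"
    and c2: "ennreal (p * t powr (p-1)) * ennreal (4/t\<^sup>2) = ennreal (4*p) * ennreal (t powr (p-3))"
    using t p C1_nonneg by (simp_all add: ennreal_mult[symmetric] power2_eq_square)
  have "ennreal (p * t powr (p-1)) *
      (\<integral>\<^sup>+ x\<in>{0<..}. ennreal (W x / (G x)\<^sup>2) * indicator {x. t \<le> G x * cmod (T f x)} x \<partial>lborel)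
    \<le> ennreal (p * t powr (p-1)) * (ennreal (2*C1/t) * normp_w 1 A (large_part t f)
      + ennreal (4/t\<^sup>2) * normp_w 2 A (small_part t f))"
    by (intro mult_left_mono distribution_bound[OF _ f1 fp p(2) t]) simp_all
  also have "\<dots> = ennreal (2*C1*p) * (ennreal (t powr (p-2)) * normp_w 1 A (large_part t f))
      + ennreal (4*p) * (ennreal (t powr (p-3)) * normp_w 2 A (small_part t f))"
    unfolding distrib_left mult.assoc[symmetric] c1 c2 ..
  finally show ?thesis .
qed

lemma pitt_estimate:
  assumes [measurable]: "f \<in> borel_measurable lborel"
    and f1: "Lp_w 1 A f" and fp: "Lp_w p A f" and p: "1 < p" "p < 2"
  shows "(\<integral>\<^sup>+ x\<in>{0<..}. ennreal (G x powr (p-2) * cmod (T f x) powr p * W x) \<partial>lborel)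
    \<le> ennreal (p * (2*C1/(p-1) + 4/(2-p))) * normp_w p A f"
proof -
  have [measurable]: "T f \<in> borel_measurable lborel" using T_meas f1 by simp
  note [measurable] = normp_w_parts_measurable[OF _ A_meas]
  define om where "om x = ennreal (W x / (G x)\<^sup>2) * indicator {0<..} x" for x
  define s where "s x = \<bar>G x\<bar> * cmod (T f x)" for x
  define N1 where "N1 t = normp_w 1 A (large_part t f)" for t
  define N2 where "N2 t = normp_w 2 A (small_part t f)" for t
  have level: "ennreal (p * t powr (p-1)) * indicator {0<..} t * (\<integral>\<^sup>+ x. om x * indicator {x. t \<le> s x} x \<partial>lborel)
      \<le> ennreal (2*C1*p) * (ennreal (t powr (p-2)) * indicator {0<..} t * N1 t)
        + ennreal (4*p) * (ennreal (t powr (p-3)) * indicator {0<..} t * N2 t)" for t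
  proof (cases "t > 0")
    case True
    have "(\<integral>\<^sup>+ x. om x * indicator {x. t \<le> s x} x \<partial>lborel)
        = (\<integral>\<^sup>+ x\<in>{0<..}. ennreal (W x / (G x)\<^sup>2) * indicator {x. t \<le> G x * cmod (T f x)} x \<partial>lborel)"
      unfolding om_def s_def
      by (intro nn_integral_cong) (auto simp: indicator_def less_imp_le[OF G_pos])
    then show ?thesis
      using level_estimate[OF _ f1 fp _ _ True] p True by (simp add: N1_def N2_def)
  qed simp
  have "(\<integral>\<^sup>+ x\<in>{0<..}. ennreal (G x powr (p-2) * cmod (T f x) powr p * W x) \<partial>lborel)
      = (\<integral>\<^sup>+ x. om x * ennreal (s x powr p) \<partial>lborel)"
  proof (intro nn_integral_cong)
    fix x :: real
    show "ennreal (G x powr (p-2) * cmod (T f x) powr p * W x) * indicator {0<..} x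
        = om x * ennreal (s x powr p)"
    proof (cases "x > 0")
      case True
      then have "G x powr (p-2) * cmod (T f x) powr p * W x = W x / (G x)\<^sup>2 * s x powr p"
        using G_pos[of x] by (simp add: s_def powr_mult powr_diff field_simps)
      moreover have "ennreal (W x / (G x)\<^sup>2 * s x powr p) = ennreal (W x / (G x)\<^sup>2) * ennreal (s x powr p)"
        using W_nonneg[of x] by (intro ennreal_mult) auto
      ultimately show ?thesis using True by (simp only: om_def) simp
    qed (simp add: om_def)
  qed
  also have "\<dots> = (\<integral>\<^sup>+ t. ennreal (p * t powr (p-1)) * indicator {0<..} t *
         (\<integral>\<^sup>+ x. om x * indicator {x. t \<le> s x} x \<partial>lborel) \<partial>lborel)"
    using p unfolding om_def s_def by (intro weighted_layer_cake) auto
  also have "\<dots> \<le> (\<integral>\<^sup>+ t. ennreal (2*C1*p) * (ennreal (t powr (p-2)) * indicator {0<..} t * N1 t)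
      + ennreal (4*p) * (ennreal (t powr (p-3)) * indicator {0<..} t * N2 t) \<partial>lborel)"
    by (intro nn_integral_mono level)
  also have "\<dots> = ennreal (2*C1*p) * (\<integral>\<^sup>+ t. ennreal (t powr (p-2)) * indicator {0<..} t * N1 t \<partial>lborel)
      + ennreal (4*p) * (\<integral>\<^sup>+ t. ennreal (t powr (p-3)) * indicator {0<..} t * N2 t \<partial>lborel)"
  proof -
    have [measurable]: "N1 \<in> borel_measurable lborel" "N2 \<in> borel_measurable lborel"
      unfolding N1_def N2_def by measurable
    show ?thesis by (subst nn_integral_add, simp_all add: nn_integral_cmult)
  qed
  also have "\<dots> \<le> ennreal (2*C1*p) * (ennreal (1/(p-1)) * normp_w p A f)
      + ennreal (4*p) * (ennreal (1/(2-p)) * normp_w p A f)"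
    unfolding N1_def N2_def using p
    by (intro add_mono mult_left_mono large_part_norms_integral small_part_norms_integral A_nonneg) auto
  also have "\<dots> = (ennreal (2*C1*p/(p-1)) + ennreal (4*p/(2-p))) * normp_w p A f"
    using p C1_nonneg
    by (simp add: mult.assoc[symmetric] ennreal_mult[symmetric] distrib_right)
  also have "ennreal (2*C1*p/(p-1)) + ennreal (4*p/(2-p)) = ennreal (p * (2*C1/(p-1) + 4/(2-p)))"
    using p C1_nonneg by (subst ennreal_plus[symmetric]) (auto simp: algebra_simps)
  finally show ?thesis .
qed

end

lemma powr_root_le:
  fixes x b e :: real
  assumes "x > 0" "e > 0" "0 \<le> b" "b \<le> x powr e"
  shows "b powr (1/e) \<le> x"
proof -
  have "b powr (1/e) \<le> (x powr e) powr (1/e)" by (rule powr_mono2) (use assms in auto)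
  also have "\<dots> = x" using assms by (simp add: powr_powr)
  finally show ?thesis .
qed

lemma gw_density_tails:
  fixes \<alpha> \<rho> k k2 b x :: real and W :: "real \<Rightarrow> real"
  assumes \<alpha>: "\<alpha> > -1/2" and k2: "k2 \<ge> 0"
    and W_large: "\<rho> = 0 \<or> x > k \<Longrightarrow> W x \<le> k2 * x powr (2*\<alpha>+1)"
    and W_small: "\<rho> \<noteq> 0 \<Longrightarrow> x \<le> k \<Longrightarrow> W x \<le> k2 * x\<^sup>2"
    and x: "x > 0" and b: "b > 0" "b \<le> gw \<alpha> \<rho> k x"
  shows "W x / (gw \<alpha> \<rho> k x)\<^sup>2
    \<le> k2 * (x powr (-(2*\<alpha>+3)) * indicator {b powr (1/(2*\<alpha>+2))..} x)
      + k2 * (x powr (-4) * indicator {b powr (1/3)..} x)"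
proof (cases "\<rho> = 0 \<or> x > k")
  case True
  then have g: "gw \<alpha> \<rho> k x = x powr (2*\<alpha>+2)" by (auto simp: gw_def algebra_simps)
  have "(x powr (2*\<alpha>+2))\<^sup>2 = x powr (2*\<alpha>+2 + (2*\<alpha>+2))"
    by (simp only: power2_eq_square powr_add[symmetric])
  then have "x powr (2*\<alpha>+1) / (x powr (2*\<alpha>+2))\<^sup>2 = x powr (2*\<alpha>+1 - (2*\<alpha>+2 + (2*\<alpha>+2)))"
    by (simp only: powr_diff)
  then have exponent: "x powr (2*\<alpha>+1) / (x powr (2*\<alpha>+2))\<^sup>2 = x powr (-(2*\<alpha>+3))"
    by (simp add: algebra_simps)
  have "W x / (gw \<alpha> \<rho> k x)\<^sup>2 \<le> k2 * x powr (2*\<alpha>+1) / (x powr (2*\<alpha>+2))\<^sup>2"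
    unfolding g using W_large[OF True] by (intro divide_right_mono) auto
  also have "\<dots> = k2 * x powr (-(2*\<alpha>+3))" using exponent by (metis times_divide_eq_right)
  finally have "W x / (gw \<alpha> \<rho> k x)\<^sup>2 \<le> k2 * x powr (-(2*\<alpha>+3))" .
  moreover have "b powr (1/(2*\<alpha>+2)) \<le> x" using powr_root_le[OF x _ _ b(2)[unfolded g]] \<alpha> b by simp
  ultimately show ?thesis using k2 by (simp add: add_increasing2)
next
  case False
  then have g: "gw \<alpha> \<rho> k x = x ^ 3" and r: "\<rho> \<noteq> 0" "x \<le> k" by (auto simp: gw_def)
  have "W x / (gw \<alpha> \<rho> k x)\<^sup>2 \<le> k2 * x\<^sup>2 / (x ^ 3)\<^sup>2"
    unfolding g using W_small[OF r] x by (intro divide_right_mono) auto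
  also have "\<dots> = k2 * x powr (-4)"
    using x by (simp add: powr_minus power_numeral_reduce powr_realpow[symmetric] field_simps)
  finally have "W x / (gw \<alpha> \<rho> k x)\<^sup>2 \<le> k2 * x powr (-4)" .
  moreover have "b powr (1/3) \<le> x" using powr_root_le[of x 3 b] x b by (simp add: g powr_realpow)
  ultimately show ?thesis using k2 by (simp add: add_increasing)
qed

lemma power_tails_mass:
  fixes \<alpha> k2 c t :: real
  assumes \<alpha>: "\<alpha> > -1/2" and k2: "k2 \<ge> 0" and c: "c > 0" and t: "t > 0"
  shows "(\<integral>\<^sup>+ x. ennreal k2 * (ennreal (x powr (-(2*\<alpha>+3))) * indicator {(t/c) powr (1/(2*\<alpha>+2))..} x)
        + ennreal k2 * (ennreal (x powr (-4)) * indicator {(t/c) powr (1/3)..} x) \<partial>lborel)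
    = ennreal (k2 * (1/(2*\<alpha>+2) + 1/3) * c / t)"
proof -
  define b1 b2 where "b1 = (t/c) powr (1/(2*\<alpha>+2))" and "b2 = (t/c) powr (1/3)"
  have b12: "b1 > 0" "b2 > 0" using c t by (auto simp: b1_def b2_def)
  have "1/(2*\<alpha>+2) * -(2*\<alpha>+2) = -1" using \<alpha> by (simp add: field_simps)
  then have b1_pow: "b1 powr (-(2*\<alpha>+2)) = c / t"
    using c t by (simp add: b1_def powr_powr powr_minus)
  have b2_pow: "b2 powr (-3) = c / t" using c t by (simp add: b2_def powr_powr powr_minus)
  have "(\<integral>\<^sup>+ x. ennreal k2 * (ennreal (x powr (-(2*\<alpha>+3))) * indicator {b1..} x)
        + ennreal k2 * (ennreal (x powr (-4)) * indicator {b2..} x) \<partial>lborel)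
      = ennreal k2 * ennreal (b1 powr (-(2*\<alpha>+2)) / (2*\<alpha>+2)) + ennreal k2 * ennreal (b2 powr (-3) / 3)"
    using nn_integral_powr_to_inf[OF b12(1), of "-(2*\<alpha>+3)"] nn_integral_powr_to_inf[OF b12(2), of "-4"] \<alpha>
    by (subst nn_integral_add) (auto simp: nn_integral_cmult algebra_simps)
  also have "\<dots> = ennreal (k2 * (c / t / (2*\<alpha>+2)) + k2 * (c / t / 3))"
  proof -
    have "0 \<le> c / t / (2*\<alpha>+2)" "0 \<le> c / t / 3" using c t \<alpha> by auto
    then show ?thesis unfolding b1_pow b2_pow using k2
      by (simp only: ennreal_plus[OF mult_nonneg_nonneg mult_nonneg_nonneg] ennreal_mult)
  qed
  also have "k2 * (c / t / (2*\<alpha>+2)) + k2 * (c / t / 3) = k2 * (1/(2*\<alpha>+2) + 1/3) * c / t"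
  proof -
    have "k2 * (c / t / q) + k2 * (c / t / 3) = k2 * (1/q + 1/3) * c / t" if "q \<noteq> 0" for q
      using that t by (simp add: field_simps)
    moreover have "2*\<alpha>+2 \<noteq> 0" using \<alpha> by simp
    ultimately show ?thesis by blast
  qed
  finally show ?thesis by (simp add: b1_def b2_def)
qed

lemma gw_weak_estimate:
  fixes \<alpha> \<rho> k k2 c t :: real and W :: "real \<Rightarrow> real"
  assumes \<alpha>: "\<alpha> > -1/2" and k2: "k2 \<ge> 0"
    and W_large: "\<And>x. x > 0 \<Longrightarrow> \<rho> = 0 \<or> x > k \<Longrightarrow> W x \<le> k2 * x powr (2*\<alpha>+1)"
    and W_small: "\<And>x. x > 0 \<Longrightarrow> \<rho> \<noteq> 0 \<Longrightarrow> x \<le> k \<Longrightarrow> W x \<le> k2 * x\<^sup>2"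
    and c: "c \<ge> 0" and t: "t > 0"
  shows "(\<integral>\<^sup>+ x\<in>{0<..}. ennreal (W x / (gw \<alpha> \<rho> k x)\<^sup>2) * indicator {x. t \<le> gw \<alpha> \<rho> k x * c} x \<partial>lborel)
     \<le> ennreal (k2 * (1/(2*\<alpha>+2) + 1/3) * c / t)"
proof (cases "c = 0")
  case True
  then show ?thesis using t by (simp add: indicator_def)
next
  case False
  then have c_pos: "c > 0" using c by simp
  define b where "b = t / c"
  have b: "b > 0" using t c_pos by (simp add: b_def)
  have tails: "ennreal (W x / (gw \<alpha> \<rho> k x)\<^sup>2) * indicator {x. t \<le> gw \<alpha> \<rho> k x * c} x * indicator {0<..} x
      \<le> ennreal k2 * (ennreal (x powr (-(2*\<alpha>+3))) * indicator {b powr (1/(2*\<alpha>+2))..} x)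
        + ennreal k2 * (ennreal (x powr (-4)) * indicator {b powr (1/3)..} x)" for x
  proof (cases "x > 0 \<and> t \<le> gw \<alpha> \<rho> k x * c")
    case True
    then have b_le: "b \<le> gw \<alpha> \<rho> k x" using c_pos by (simp add: b_def divide_le_eq)
    define R where "R = k2 * (x powr (-(2*\<alpha>+3)) * indicator {b powr (1/(2*\<alpha>+2))..} x)
      + k2 * (x powr (-4) * indicator {b powr (1/3)..} x)"
    from gw_density_tails[where \<rho>=\<rho> and k=k and b=b and x=x and W=W, OF \<alpha> k2 _ _ _ b b_le]
    have "W x / (gw \<alpha> \<rho> k x)\<^sup>2 \<le> R" using W_large W_small True by (simp add: R_def)
    then have "ennreal (W x / (gw \<alpha> \<rho> k x)\<^sup>2) \<le> ennreal R" by (rule ennreal_leI)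
    also have "ennreal R = ennreal k2 * (ennreal (x powr (-(2*\<alpha>+3))) * indicator {b powr (1/(2*\<alpha>+2))..} x)
        + ennreal k2 * (ennreal (x powr (-4)) * indicator {b powr (1/3)..} x)"
      unfolding R_def using k2 by (simp add: ennreal_plus ennreal_mult' ennreal_indicator)
    finally show ?thesis using True by simp
  qed (auto simp: indicator_def)
  have "(\<integral>\<^sup>+ x\<in>{0<..}. ennreal (W x / (gw \<alpha> \<rho> k x)\<^sup>2) * indicator {x. t \<le> gw \<alpha> \<rho> k x * c} x \<partial>lborel)
     \<le> (\<integral>\<^sup>+ x. ennreal k2 * (ennreal (x powr (-(2*\<alpha>+3))) * indicator {b powr (1/(2*\<alpha>+2))..} x)
        + ennreal k2 * (ennreal (x powr (-4)) * indicator {b powr (1/3)..} x) \<partial>lborel)"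
    by (intro nn_integral_mono tails)
  also have "\<dots> = ennreal (k2 * (1/(2*\<alpha>+2) + 1/3) * c / t)"
    unfolding b_def by (rule power_tails_mass[OF \<alpha> k2 c_pos t])
  finally show ?thesis .
qed

lemma Lp_w_convergence_AE_subseq:
  fixes T :: "nat \<Rightarrow> real \<Rightarrow> complex" and h :: "real \<Rightarrow> complex" and W :: "real \<Rightarrow> real"
  assumes q: "q > 0"
    and [measurable]: "\<And>n. T n \<in> borel_measurable lborel" "h \<in> borel_measurable lborel"
      "W \<in> borel_measurable lborel"
    and W_nonneg: "\<And>x. W x \<ge> 0"
    and conv: "(\<lambda>n. normp_w q W (\<lambda>x. T n x - h x)) \<longlonglongrightarrow> 0"
  obtains r where "strict_mono r"
    and "AE x in lborel. x > 0 \<longrightarrow> W x > 0 \<longrightarrow> (\<lambda>n. T (r n) x) \<longlonglongrightarrow> h x"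
proof -
  define u where "u n x = cmod (T n x - h x) powr q * W x * indicator {0<..} x" for n x
  have u_meas[measurable]: "u n \<in> borel_measurable lborel" for n unfolding u_def by measurable
  have u_nonneg: "u n x \<ge> 0" for n x using W_nonneg[of x] by (simp add: u_def)
  have u_norm: "(\<integral>\<^sup>+ x. ennreal (norm (u n x)) \<partial>lborel) = normp_w q W (\<lambda>x. T n x - h x)" for n
    unfolding normp_w_def u_def using W_nonneg by (intro nn_integral_cong) (auto simp: indicator_def)
  obtain N where N: "\<And>n. n \<ge> N \<Longrightarrow> normp_w q W (\<lambda>x. T n x - h x) < 1"
    using order_tendstoD(2)[OF conv, of 1] by (auto simp: eventually_sequentially)
  define v where "v n = u (n + N)" for n
  have v_int: "integrable lborel (v n)" for n
    using N[of "n + N"] u_norm[of "n + N"]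
    by (subst integrable_iff_bounded) (auto simp: v_def intro: order.strict_trans)
  have "(\<lambda>n. normp_w q W (\<lambda>x. T (n + N) x - h x)) \<longlonglongrightarrow> 0"
    using LIMSEQ_ignore_initial_segment[OF conv, of N] by simp
  then have "(\<lambda>n. enn2real (normp_w q W (\<lambda>x. T (n + N) x - h x))) \<longlonglongrightarrow> 0"
    using tendsto_enn2real[of _ 0] by simp
  moreover have "(\<integral>x. norm (v n x) \<partial>lborel) = enn2real (normp_w q W (\<lambda>x. T (n + N) x - h x))" for n
    unfolding u_norm[symmetric] v_def by (rule integral_eq_nn_integral) (auto simp: u_nonneg)
  ultimately have "(\<lambda>n. (\<integral>x. norm (v n x) \<partial>lborel)) \<longlonglongrightarrow> 0" by simp
  from tendsto_L1_AE_subseq[OF v_int this]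
  obtain r where r: "strict_mono r" "AE x in lborel. (\<lambda>n. v (r n) x) \<longlonglongrightarrow> 0" by blast
  show ?thesis
  proof (rule that[of "\<lambda>n. r n + N"])
    show "strict_mono (\<lambda>n. r n + N)" using r(1) by (simp add: strict_mono_def)
    show "AE x in lborel. x > 0 \<longrightarrow> W x > 0 \<longrightarrow> (\<lambda>n. T (r n + N) x) \<longlonglongrightarrow> h x"
      using r(2)
    proof eventually_elim
      case (elim x)
      show ?case
      proof (intro impI)
        assume x: "x > 0" "W x > 0"
        then have "(\<lambda>n. cmod (T (r n + N) x - h x) powr q * W x / W x) \<longlonglongrightarrow> 0 / W x"
          using elim by (intro tendsto_divide) (auto simp: v_def u_def)
        then have "(\<lambda>n. (cmod (T (r n + N) x - h x) powr q) powr (1/q)) \<longlonglongrightarrow> 0 powr (1/q)"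
          using x q by (intro tendsto_powr') auto
        then have "(\<lambda>n. cmod (T (r n + N) x - h x)) \<longlonglongrightarrow> 0" using q by (simp add: powr_powr)
        then show "(\<lambda>n. T (r n + N) x) \<longlonglongrightarrow> h x" by (simp add: tendsto_norm_zero_iff LIM_zero_iff)
      qed
    qed
  qed
qed

lemma weighted_bound_limit:
  fixes T :: "nat \<Rightarrow> real \<Rightarrow> complex" and h :: "real \<Rightarrow> complex" and V W :: "real \<Rightarrow> real"
    and B :: "nat \<Rightarrow> ennreal"
  assumes q: "q > 0" and p: "p > 0"
    and [measurable]: "\<And>n. T n \<in> borel_measurable lborel" "h \<in> borel_measurable lborel"
      "V \<in> borel_measurable lborel" "W \<in> borel_measurable lborel"
    and W_nonneg: "\<And>x. W x \<ge> 0"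
    and conv: "(\<lambda>n. normp_w q W (\<lambda>x. T n x - h x)) \<longlonglongrightarrow> 0"
    and bound: "\<And>n. (\<integral>\<^sup>+ x\<in>{0<..}. ennreal (V x * cmod (T n x) powr p * W x) \<partial>lborel) \<le> B n"
    and B_lim: "B \<longlonglongrightarrow> Bl"
  shows "(\<integral>\<^sup>+ x\<in>{0<..}. ennreal (V x * cmod (h x) powr p * W x) \<partial>lborel) \<le> Bl"
proof -
  obtain r where r: "strict_mono r"
    and ae: "AE x in lborel. x > 0 \<longrightarrow> W x > 0 \<longrightarrow> (\<lambda>n. T (r n) x) \<longlonglongrightarrow> h x"
    using Lp_w_convergence_AE_subseq[OF q _ _ _ W_nonneg conv] by auto
  define F where "F = (\<lambda>n x. ennreal (V x * cmod (T (r n) x) powr p * W x) * indicator {0<..} x)"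
  have "AE x in lborel. ennreal (V x * cmod (h x) powr p * W x) * indicator {0<..} x = liminf (\<lambda>n. F n x)"
    using ae
  proof eventually_elim
    case (elim x)
    show ?case
    proof (cases "x > 0 \<and> W x > 0")
      case True
      then have "(\<lambda>n. V x * cmod (T (r n) x) powr p * W x) \<longlonglongrightarrow> V x * cmod (h x) powr p * W x"
        using elim p by (intro tendsto_intros tendsto_powr') auto
      then have "(\<lambda>n. F n x) \<longlonglongrightarrow> ennreal (V x * cmod (h x) powr p * W x) * indicator {0<..} x"
        using True by (simp add: F_def tendsto_ennrealI)
      then show ?thesis by (simp add: lim_imp_Liminf)
    next
      case False
      then have "x \<le> 0 \<or> W x = 0" using W_nonneg[of x] by force
      then show ?thesis by (auto simp: F_def Liminf_const)
    qed
  qed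
  then have "(\<integral>\<^sup>+ x\<in>{0<..}. ennreal (V x * cmod (h x) powr p * W x) \<partial>lborel) = (\<integral>\<^sup>+ x. liminf (\<lambda>n. F n x) \<partial>lborel)"
    by (rule nn_integral_cong_AE)
  also have "\<dots> \<le> liminf (\<lambda>n. integral\<^sup>N lborel (F n))"
    by (rule nn_integral_liminf) (simp add: F_def)
  also have "\<dots> \<le> liminf (\<lambda>n. B (r n))"
    using bound by (intro Liminf_mono always_eventually allI) (simp add: F_def)
  also have "liminf (\<lambda>n. B (r n)) = Bl"
    using LIMSEQ_subseq_LIMSEQ[OF B_lim r] by (intro lim_imp_Liminf) (auto simp: o_def)
  finally show ?thesis .
qed

lemma normp_w_add_le:
  fixes f g :: "real \<Rightarrow> complex" and A :: "real \<Rightarrow> real"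
  assumes [measurable]: "f \<in> borel_measurable lborel" "g \<in> borel_measurable lborel"
      "A \<in> borel_measurable lborel"
    and A_nonneg: "\<And>x. A x \<ge> 0" and p: "p > 0"
  shows "normp_w p A (\<lambda>x. f x + g x) \<le> ennreal (2 powr p) * (normp_w p A f + normp_w p A g)"
proof -
  have pointwise: "cmod (a + b) powr p \<le> 2 powr p * (cmod a powr p + cmod b powr p)" for a b :: complex
  proof -
    define m where "m = max (cmod a) (cmod b)"
    have "cmod (a + b) powr p \<le> (2 * m) powr p"
      using norm_triangle_ineq[of a b] p by (intro powr_mono2) (auto simp: m_def)
    also have "\<dots> = 2 powr p * m powr p" by (simp add: powr_mult m_def)
    also have "m powr p \<le> cmod a powr p + cmod b powr p" by (simp add: m_def max_def)
    finally show ?thesis by simp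
  qed
  have "normp_w p A (\<lambda>x. f x + g x)
      \<le> (\<integral>\<^sup>+ x. ennreal (2 powr p) * (ennreal (cmod (f x) powr p * A x) * indicator {0<..} x)
           + ennreal (2 powr p) * (ennreal (cmod (g x) powr p * A x) * indicator {0<..} x) \<partial>lborel)"
    unfolding normp_w_def
  proof (intro nn_integral_mono)
    fix x
    have "cmod (f x + g x) powr p * A x \<le> 2 powr p * (cmod (f x) powr p + cmod (g x) powr p) * A x"
      by (rule mult_right_mono[OF pointwise A_nonneg])
    also have "\<dots> = 2 powr p * (cmod (f x) powr p * A x) + 2 powr p * (cmod (g x) powr p * A x)"
      by (simp add: algebra_simps)
    finally have "cmod (f x + g x) powr p * A x
        \<le> 2 powr p * (cmod (f x) powr p * A x) + 2 powr p * (cmod (g x) powr p * A x)" .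
    then have "ennreal (cmod (f x + g x) powr p * A x)
        \<le> ennreal (2 powr p * (cmod (f x) powr p * A x) + 2 powr p * (cmod (g x) powr p * A x))"
      by (rule ennreal_leI)
    also have "\<dots> = ennreal (2 powr p) * ennreal (cmod (f x) powr p * A x)
        + ennreal (2 powr p) * ennreal (cmod (g x) powr p * A x)"
      using A_nonneg[of x] by (simp add: ennreal_plus ennreal_mult)
    finally show "ennreal (cmod (f x + g x) powr p * A x) * indicator {0<..} x
      \<le> ennreal (2 powr p) * (ennreal (cmod (f x) powr p * A x) * indicator {0<..} x)
         + ennreal (2 powr p) * (ennreal (cmod (g x) powr p * A x) * indicator {0<..} x)"
      by (cases "x > 0") (auto simp: mult.assoc)
  qed
  also have "\<dots> = ennreal (2 powr p) * (normp_w p A f + normp_w p A g)"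
    unfolding normp_w_def by (subst nn_integral_add) (auto simp: nn_integral_cmult distrib_left)
  finally show ?thesis .
qed

lemma CT_eigenfunctions:
  assumes CT: "CT_hyp \<alpha> \<rho> B A" and IP: "is_phi \<rho> A phi"
    and FT_L1: "\<And>f l. Lp_w 1 A f \<Longrightarrow> ennreal (cmod (FT A phi f l)) \<le> normp_w 1 A f"
  shows phi_bound: "\<And>l x. x \<ge> 0 \<Longrightarrow> \<bar>phi l x\<bar> \<le> 1"
    and FT_measurable_L1: "\<And>f. Lp_w 1 A f \<Longrightarrow> FT A phi f \<in> borel_measurable lborel"
proof -
  note A = CT_hyp_density[OF CT]
  have phi_cont: "\<And>l. continuous_on {0..} (phi l)" and phi_0: "\<And>l. phi l 0 = 1"
    and phi_deriv0: "\<And>l. (phi l has_real_derivative 0) (at 0 within {0..})"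
    and ode: "\<And>l x. x > 0 \<Longrightarrow> phi l differentiable (at x) \<and> deriv (phi l) differentiable (at x) \<and>
        deriv (deriv (phi l)) x + deriv A x / A x * deriv (phi l) x = -(l\<^sup>2 + \<rho>\<^sup>2) * phi l x"
    using IP unfolding is_phi_def by auto
  show bound: "\<bar>phi l x\<bar> \<le> 1" if "x \<ge> 0" for l x
  proof (cases "x = 0")
    case False
    then show ?thesis
      using phi_abs_le_one[OF A(1,3,4) phi_cont FT_L1] that by simp
  qed (simp add: phi_0)
  have phi_diff: "\<And>l x. x > 0 \<Longrightarrow> phi l differentiable (at x)" using ode by blast
  have phi_int: "A x * deriv (phi l) x = -(l\<^sup>2 + \<rho>\<^sup>2) * integral {0..x} (\<lambda>s. A s * phi l s)"
    if "x > 0" for l x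
    by (rule eigenfunction_integral_form[OF A(1,3,4,5) phi_cont phi_deriv0 ode that])
  have "continuous_on (UNIV \<times> {0<..}) (\<lambda>z. phi (fst z) (snd z))"
    by (rule phi_joint_continuous[OF A(1) A(2) A(3) A(4) phi_cont phi_0 phi_diff phi_int bound])
  then show "FT A phi f \<in> borel_measurable lborel" if "Lp_w 1 A f" for f
    using FT_measurable[OF A(4) _ that] by simp
qed

lemma CT_pitt_interpolation:
  assumes CT: "CT_hyp \<alpha> \<rho> B A" and IP: "is_phi \<rho> A phi"
    and PD: "plancherel_density \<alpha> \<rho> A phi W k k1 k2"
    and cases: "(\<rho> = 0 \<and> \<alpha> > 0) \<or> \<rho> > 0"
  shows "pitt_interpolation (FT A phi) (restrict_pos A) W (gw \<alpha> \<rho> k) (k2 * (1/(2*\<alpha>+2) + 1/3))"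
proof -
  note A = CT_hyp_density[OF CT]
  have W_cont: "continuous_on UNIV W" and W_nonneg: "\<And>x. W x \<ge> 0"
    and planch: "\<And>f. Lp_w 1 A f \<Longrightarrow> Lp_w 2 A f \<Longrightarrow> normp_w 2 W (FT A phi f) = normp_w 2 A f"
    and FT_L1: "\<And>f l. Lp_w 1 A f \<Longrightarrow> ennreal (cmod (FT A phi f l)) \<le> normp_w 1 A f"
    and k2: "k2 > 0"
    and E1: "\<rho> = 0 \<and> \<alpha> > 0 \<Longrightarrow> \<forall>l. W l \<le> k2 * \<bar>l\<bar> powr (2*\<alpha>+1)"
    and E2: "\<rho> > 0 \<Longrightarrow> \<forall>l. \<bar>l\<bar> > k \<longrightarrow> W l \<le> k2 * \<bar>l\<bar> powr (2*\<alpha>+1)"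
    and E3: "\<rho> > 0 \<Longrightarrow> \<forall>l. \<bar>l\<bar> \<le> k \<longrightarrow> W l \<le> k2 * l\<^sup>2"
    using PD unfolding plancherel_density_def by auto
  note phi = CT_eigenfunctions[OF CT IP FT_L1]
  have phi_cont: "\<And>l. continuous_on {0..} (phi l)" using IP unfolding is_phi_def by auto
  show ?thesis
  proof
    show "0 \<le> k2 * (1/(2*\<alpha>+2) + 1/3)" using k2 A(6) by simp
    show "restrict_pos A \<in> borel_measurable lborel" by (rule restrict_pos_measurable_cont[OF A(4)])
    show "0 \<le> restrict_pos A x" for x using A(2)[of x] by (simp add: restrict_pos_def indicator_def)
    show "W \<in> borel_measurable lborel" using borel_measurable_continuous_onI[OF W_cont] by simp
    show "0 \<le> W x" for x by (rule W_nonneg)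
    show "gw \<alpha> \<rho> k \<in> borel_measurable lborel" unfolding gw_def by measurable
    show "0 < gw \<alpha> \<rho> k x" if "0 < x" for x using that by (simp add: gw_def)
    show "FT A phi f \<in> borel_measurable lborel" if "Lp_w 1 (restrict_pos A) f" for f
      using phi(2) that by (simp add: Lp_w_restrict_weight)
    show "ennreal (cmod (FT A phi f l)) \<le> normp_w 1 (restrict_pos A) f"
      if "Lp_w 1 (restrict_pos A) f" for f l
      using FT_L1 that by (simp add: Lp_w_restrict_weight normp_w_restrict_weight)
    show "normp_w 2 W (FT A phi f) \<le> normp_w 2 (restrict_pos A) f"
      if "Lp_w 1 (restrict_pos A) f" "Lp_w 2 (restrict_pos A) f" for f
      using planch that by (simp add: Lp_w_restrict_weight normp_w_restrict_weight)
    show "FT A phi (\<lambda>x. f x + g x) l = FT A phi f l + FT A phi g l"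
      if "Lp_w 1 (restrict_pos A) f" "Lp_w 1 (restrict_pos A) g" for f g l
      using that unfolding Lp_w_restrict_weight
      by (intro FT_add FT_integrand_integrable[OF A(2,4) phi_cont] phi) auto
    show "(\<integral>\<^sup>+ x\<in>{0<..}. ennreal (W x / (gw \<alpha> \<rho> k x)\<^sup>2) * indicator {x. t \<le> gw \<alpha> \<rho> k x * c} x \<partial>lborel)
        \<le> ennreal (k2 * (1/(2*\<alpha>+2) + 1/3) * c / t)" if "0 \<le> c" "0 < t" for c t
    proof (rule gw_weak_estimate[OF A(6) _ _ _ that])
      show "W x \<le> k2 * x powr (2*\<alpha>+1)" if "x > 0" "\<rho> = 0 \<or> x > k" for x
        using that cases E1[THEN spec[of _ x]] E2[THEN spec[of _ x]] by auto
      show "W x \<le> k2 * x\<^sup>2" if "x > 0" "\<rho> \<noteq> 0" "x \<le> k" for x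
        using that cases E3[THEN spec[of _ x]] by auto
    qed (use k2 in simp)
  qed
qed

lemma CT_pitt_inequality_L1:
  assumes CT: "CT_hyp \<alpha> \<rho> B A" and IP: "is_phi \<rho> A phi"
    and PD: "plancherel_density \<alpha> \<rho> A phi W k k1 k2"
    and cases: "(\<rho> = 0 \<and> \<alpha> > 0) \<or> \<rho> > 0"
    and p: "1 < p" "p \<le> 2"
  obtains C where "C > 0"
    and "\<And>f. f \<in> borel_measurable lborel \<Longrightarrow> Lp_w 1 A f \<Longrightarrow> Lp_w p A f \<Longrightarrow>
      (\<integral>\<^sup>+ x\<in>{0<..}. ennreal (gw \<alpha> \<rho> k x powr (p-2) * cmod (FT A phi f x) powr p * W x) \<partial>lborel)
        \<le> ennreal C * normp_w p A f"
proof (cases "p = 2")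
  case True
  have planch: "\<And>f. Lp_w 1 A f \<Longrightarrow> Lp_w 2 A f \<Longrightarrow> normp_w 2 W (FT A phi f) = normp_w 2 A f"
    using PD unfolding plancherel_density_def by auto
  show ?thesis
  proof (rule that[of 1])
    fix f assume "Lp_w 1 A f" "Lp_w p A f"
    have "(\<integral>\<^sup>+ x\<in>{0<..}. ennreal (gw \<alpha> \<rho> k x powr (p-2) * cmod (FT A phi f x) powr p * W x) \<partial>lborel)
        = normp_w 2 W (FT A phi f)"
      unfolding normp_w_def True by (intro nn_integral_cong) (auto simp: indicator_def gw_def)
    also have "\<dots> = normp_w p A f" using planch \<open>Lp_w 1 A f\<close> \<open>Lp_w p A f\<close> True by simp
    finally show "(\<integral>\<^sup>+ x\<in>{0<..}. ennreal (gw \<alpha> \<rho> k x powr (p-2) * cmod (FT A phi f x) powr p * W x) \<partial>lborel)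
        \<le> ennreal 1 * normp_w p A f" by simp
  qed simp
next
  case False
  interpret pitt_interpolation "FT A phi" "restrict_pos A" W "gw \<alpha> \<rho> k" "k2 * (1/(2*\<alpha>+2) + 1/3)"
    by (rule CT_pitt_interpolation[OF CT IP PD cases])
  show ?thesis
  proof (rule that)
    show "0 < p * (2 * (k2 * (1/(2*\<alpha>+2) + 1/3)) / (p-1) + 4/(2-p))"
      using C1_nonneg p False by (intro mult_pos_pos add_nonneg_pos) auto
    fix f assume "f \<in> borel_measurable lborel" "Lp_w 1 A f" "Lp_w p A f"
    then show "(\<integral>\<^sup>+ x\<in>{0<..}. ennreal (gw \<alpha> \<rho> k x powr (p-2) * cmod (FT A phi f x) powr p * W x) \<partial>lborel)
        \<le> ennreal (p * (2 * (k2 * (1/(2*\<alpha>+2) + 1/3)) / (p-1) + 4/(2-p))) * normp_w p A f"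
      using pitt_estimate[of f p] p False by (simp add: Lp_w_restrict_weight normp_w_restrict_weight)
  qed
qed

(* The quasi-triangle inequality in the form used for approximations: functions on R_+ need
   only be measurable on ]0,+oo[, and A only continuous and nonnegative on [0,+oo[. *)
lemma normp_w_approx_le:
  fixes f g :: "real \<Rightarrow> complex" and A :: "real \<Rightarrow> real"
  assumes A_cont: "continuous_on {0..} A" and A_nonneg: "\<And>x. x \<ge> 0 \<Longrightarrow> A x \<ge> 0"
    and [measurable]: "restrict_pos f \<in> borel_measurable lborel" "restrict_pos g \<in> borel_measurable lborel"
    and p: "p > 0"
  shows "normp_w p A g \<le> ennreal (2 powr p) * (normp_w p A f + normp_w p A (\<lambda>x. g x - f x))"
proof -
  have [measurable]: "restrict_pos A \<in> borel_measurable lborel"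
    by (rule restrict_pos_measurable_cont[OF A_cont])
  have "restrict_pos (\<lambda>x. g x - f x) = (\<lambda>x. restrict_pos g x - restrict_pos f x)"
    by (auto simp: restrict_pos_def fun_eq_iff scaleR_diff_right)
  then have "restrict_pos (\<lambda>x. g x - f x) \<in> borel_measurable lborel" by simp
  moreover have "restrict_pos A x \<ge> 0" for x
    using A_nonneg[of x] by (simp add: restrict_pos_def indicator_def)
  moreover have "(\<lambda>x. restrict_pos f x + restrict_pos (\<lambda>x. g x - f x) x) = restrict_pos g"
    by (auto simp: restrict_pos_def fun_eq_iff scaleR_diff_right)
  ultimately show ?thesis
    using normp_w_add_le[of "restrict_pos f" "restrict_pos (\<lambda>x. g x - f x)" "restrict_pos A" p] p
    by (simp add: normp_w_restrict_weight normp_w_restrict_pos)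
qed

lemma weighted_bound_FT_ext:
  fixes A W V :: "real \<Rightarrow> real" and phi :: "real \<Rightarrow> real \<Rightarrow> real" and f h :: "real \<Rightarrow> complex"
  assumes p: "1 < p" and C: "C \<ge> 0"
    and A_cont: "continuous_on {0..} A" and A_nonneg: "\<And>x. x \<ge> 0 \<Longrightarrow> A x \<ge> 0"
    and [measurable]: "W \<in> borel_measurable lborel" "V \<in> borel_measurable lborel"
    and W_nonneg: "\<And>x. W x \<ge> 0"
    and FT_meas: "\<And>g. Lp_w 1 A g \<Longrightarrow> FT A phi g \<in> borel_measurable lborel"
    and bound: "\<And>g. g \<in> borel_measurable lborel \<Longrightarrow> Lp_w 1 A g \<Longrightarrow> Lp_w p A g \<Longrightarrow>
      (\<integral>\<^sup>+ x\<in>{0<..}. ennreal (V x * cmod (FT A phi g x) powr p * W x) \<partial>lborel) \<le> ennreal C * normp_w p A g"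
    and f: "Lp_w p A f" and h: "FT_ext p A W phi f h"
  shows "(\<integral>\<^sup>+ x\<in>{0<..}. ennreal (V x * cmod (h x) powr p * W x) \<partial>lborel) \<le> ennreal (C * 2 powr p) * normp_w p A f"
proof -
  obtain fs where fs: "\<And>n. Lp_w 1 A (fs n) \<and> Lp_w p A (fs n)"
    and fs_conv: "(\<lambda>n. normp_w p A (\<lambda>x. fs n x - f x)) \<longlonglongrightarrow> 0"
    and FT_conv: "(\<lambda>n. normp_w (p/(p-1)) W (\<lambda>x. FT A phi (fs n) x - h x)) \<longlonglongrightarrow> 0"
    using h unfolding FT_ext_def by blast
  have [measurable]: "FT A phi (fs n) \<in> borel_measurable lborel" "restrict_pos (fs n) \<in> borel_measurable lborel"
    "restrict_pos f \<in> borel_measurable lborel" "restrict_pos h \<in> borel_measurable lborel" for n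
    using FT_meas fs Lp_w_measurable[OF f] Lp_w_measurable[of 1 A "fs n"] h
      Lp_w_measurable[of "p/(p-1)" W h] by (auto simp: FT_ext_def)
  define Bn where "Bn n = ennreal C * (ennreal (2 powr p) * (normp_w p A f + normp_w p A (\<lambda>x. fs n x - f x)))" for n
  have approx_bound: "(\<integral>\<^sup>+ x\<in>{0<..}. ennreal (V x * cmod (FT A phi (fs n) x) powr p * W x) \<partial>lborel) \<le> Bn n" for n
  proof -
    have "normp_w p A (fs n) \<le> ennreal (2 powr p) * (normp_w p A f + normp_w p A (\<lambda>x. fs n x - f x))"
      using p by (intro normp_w_approx_le[OF A_cont A_nonneg]) auto
    moreover have "(\<integral>\<^sup>+ x\<in>{0<..}. ennreal (V x * cmod (FT A phi (fs n) x) powr p * W x) \<partial>lborel)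
        \<le> ennreal C * normp_w p A (fs n)"
      using bound[of "restrict_pos (fs n)"] fs[of n]
      by (simp add: FT_restrict_pos Lp_w_restrict_pos normp_w_restrict_pos)
    ultimately show ?thesis unfolding Bn_def by (meson mult_left_mono order_trans zero_le)
  qed
  have "Bn \<longlonglongrightarrow> ennreal C * (ennreal (2 powr p) * (normp_w p A f + 0))"
    unfolding Bn_def by (intro ennreal_tendsto_cmult tendsto_add tendsto_const fs_conv) auto
  moreover have "normp_w (p/(p-1)) W (\<lambda>x. FT A phi (fs n) x - restrict_pos h x)
      = normp_w (p/(p-1)) W (\<lambda>x. FT A phi (fs n) x - h x)" for n
    unfolding normp_w_def by (intro nn_integral_cong) (auto simp: restrict_pos_def indicator_def)
  then have "(\<lambda>n. normp_w (p/(p-1)) W (\<lambda>x. FT A phi (fs n) x - restrict_pos h x)) \<longlonglongrightarrow> 0"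
    using FT_conv by simp
  ultimately have "(\<integral>\<^sup>+ x\<in>{0<..}. ennreal (V x * cmod (restrict_pos h x) powr p * W x) \<partial>lborel)
      \<le> ennreal C * (ennreal (2 powr p) * (normp_w p A f + 0))"
    using p by (intro weighted_bound_limit[OF _ _ _ _ _ _ W_nonneg _ approx_bound]) auto
  moreover have "(\<integral>\<^sup>+ x\<in>{0<..}. ennreal (V x * cmod (restrict_pos h x) powr p * W x) \<partial>lborel)
      = (\<integral>\<^sup>+ x\<in>{0<..}. ennreal (V x * cmod (h x) powr p * W x) \<partial>lborel)"
    by (intro nn_integral_cong) (auto simp: restrict_pos_def indicator_def)
  ultimately show ?thesis using C by (simp add: ennreal_mult mult.assoc)
qed

theorem lemma1:
  fixes \<alpha> \<rho> k k1 k2 p :: real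
    and A B :: "real \<Rightarrow> real" and W :: "real \<Rightarrow> real" and phi :: "real \<Rightarrow> real \<Rightarrow> real"
  assumes "CT_hyp \<alpha> \<rho> B A"
    and "is_phi \<rho> A phi"
    and "plancherel_density \<alpha> \<rho> A phi W k k1 k2"
    and "(\<rho> = 0 \<and> \<alpha> > 0) \<or> \<rho> > 0"
    and "1 < p" and "p \<le> 2"
  shows "\<exists>C>0. \<forall>f h. Lp_w p A f \<and> FT_ext p A W phi f h \<longrightarrow>
           (\<integral>\<^sup>+ x\<in>{0<..}. ennreal (gw \<alpha> \<rho> k x powr (p-2) * cmod (h x) powr p * W x) \<partial>lborel)
             \<le> ennreal C * normp_w p A f"
proof -
  obtain C where C: "C > 0"
    and bound: "\<And>f. f \<in> borel_measurable lborel \<Longrightarrow> Lp_w 1 A f \<Longrightarrow> Lp_w p A f \<Longrightarrow>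
      (\<integral>\<^sup>+ x\<in>{0<..}. ennreal (gw \<alpha> \<rho> k x powr (p-2) * cmod (FT A phi f x) powr p * W x) \<partial>lborel)
        \<le> ennreal C * normp_w p A f"
    using CT_pitt_inequality_L1[OF assms] by blast
  have W_cont: "continuous_on UNIV W" and W_nonneg: "\<And>x. W x \<ge> 0"
    and FT_L1: "\<And>f l. Lp_w 1 A f \<Longrightarrow> ennreal (cmod (FT A phi f l)) \<le> normp_w 1 A f"
    using assms(3) unfolding plancherel_density_def by auto
  have W_meas: "W \<in> borel_measurable lborel" using borel_measurable_continuous_onI[OF W_cont] by simp
  have V_meas: "(\<lambda>x. gw \<alpha> \<rho> k x powr (p-2)) \<in> borel_measurable lborel" unfolding gw_def by measurable
  note A = CT_hyp_density[OF assms(1)]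
  note FT_meas = CT_eigenfunctions(2)[OF assms(1,2) FT_L1]
  show ?thesis
  proof (intro exI[of _ "C * 2 powr p"] conjI allI impI)
    show "0 < C * 2 powr p" using C by simp
    fix f h assume "Lp_w p A f \<and> FT_ext p A W phi f h"
    then show "(\<integral>\<^sup>+ x\<in>{0<..}. ennreal (gw \<alpha> \<rho> k x powr (p-2) * cmod (h x) powr p * W x) \<partial>lborel)
        \<le> ennreal (C * 2 powr p) * normp_w p A f"
      using C by (intro weighted_bound_FT_ext[OF assms(5) _ A(4,2) W_meas V_meas W_nonneg FT_meas bound])
        auto
  qed
qed

end
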